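(* Identify Kashiwara's crystal $B(\infty)$ with its polyhedral realization $\mathcal{B}(\infty)$ (equipped with the bicrystal structure described in the context), so that the Kashiwara–Park extended crystal $\widehat{B}(\infty)$ and the set $\widehat{\mathcal{B}}(\infty)$ are the same set. Then the maps $\widehat{\rm wt}$, $\widehat{\varepsilon}_{(i,k)}$, $\widetilde{E}_{(i,k)}$, $\widetilde{F}_{(i,k)}$ of the Kashiwara–Park extended crystal coincide, respectively, with the combinatorially defined maps $\widehat{\rm wt}$, $\widehat{\varepsilon}_{(i,k)}$, $\widetilde{E}_{(i,k)}$, $\widetilde{F}_{(i,k)}$ on $\widehat{\mathcal{B}}(\infty)$.
   Context: Let $\mathfrak{g}$ be a finite-dimensional simple Lie algebra of type $A_n$, $B_n$ or $D_n$ with index set $I=\{1,\dots,n\}$, and let $\iota_0=(\dots,n,\dots,1,n,\dots,1)$. The polyhedral realization $\mathcal{B}(\infty)\subset\mathbb{Z}_+^\infty$ is the image of $B(\infty)$ under the Kashiwara embedding for $\iota_0$; its points are written $b=(b_{s,t})$, where $b_{s,t}$ is the coordinate at the $s$-th occurrence of $t$ in $\iota_0$, $x_{s,t}$ are the coordinate functions, ${\bf e}_{s,t}$ the standard basis vectors (set to $0$ outside the relevant finite index set $\mathcal{I}_n^X$), and ${\bf v}(s,t)={\bf e}_{s,t}-{\bf e}_{s-1,t}$. Put $\beta_{s,t}=x_{s,t}+\sum_{k>t}\langle h_t,\alpha_k\rangle x_{s,k}+\sum_{k<t}\langle h_t,\alpha_k\rangle x_{s+1,k}+x_{s+1,t}$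 and $\beta^*_{s,t}=x_{s-1,t}+\sum_{k>t}\langle h_t,\alpha_k\rangle x_{s-1,k}+\sum_{k<t}\langle h_t,\alpha_k\rangle x_{s,k}+x_{s,t}$. For each $i$ there are tableaux $T_i$ (a single row with entries $T_i(1,t)=\beta_{t,i}$, of length $n+1-i$, $n$, $n-1$ in types $A_n,B_n,D_n$) and $T_i^*$ (a single row $T_i^*(1,t)=\beta^*_{t,i+1-t}$, $1\le t\le i$, for $i\le n$ in type $A$, $i\le n-1$ in type $B$, $i\le n-2$ in type $D$; for the remaining $i$ a staircase tableau: in type $B_n$, $T_n^*$ has shape $(n,n-1,\dots,1)$ with $T_n^*(s,t)=2\beta^*_{s+t-1,n-t}$ for $t\ge2$ and $T_n^*(s,1)=\beta^*_{s,n}$; in type $D_n$, $T_{n-1}^*$ has shape $(n-1,\dots,1)$ with $T_{n-1}^*(s,t)=\beta^*_{s+t-1,n-t}$ for $t\ge2$, $T_{n-1}^*(s,1)=\beta^*_{s,n-1}$ for $s$ odd and $\beta^*_{s,n}$ for $s$ even, and $T_n^*$ obtained by swapping $n-1$ and $n$ in the first column). For a cell $(s,t)$, $\mathcal{I}_T(s,t)$ denotes the index $(a,b)$ of the $\beta_{a,b}$ or $\beta^*_{a,b}$ in that cell. $\Pi_i$ is the set of nonempty partitions inside the shape of $T_i$, $\Pi_i^*$ the set of nonempty strict partitions inside the shape of $T_i^*$. For $\lambda=(l)\in\Pi_i$ let $\Gamma_\lambda=\sum_{s=l}^{|\eta|}\beta_{s,i}$ ($\eta$ the shape of $T_i$),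 and for $\mu\in\Pi_i^*$ let $\Gamma^*_\mu=\sum_{(s,t)\in\mu}T_i^*(s,t)$. The bicrystal structure on $\mathcal{B}(\infty)$ is: ${\rm wt}(b)=-\sum b_{s,t}\alpha_t$; $\varepsilon_i(b)=\max_{\lambda\in\Pi_i}\Gamma_\lambda(b)$, $\varepsilon_i^*(b)=\max_{\mu\in\Pi_i^*}\Gamma^*_\mu(b)$; with $m_i,M_i$ (resp. $m_i^*,M_i^*$) the minimal and maximal partitions attaining the maximum, $\widetilde{f}_i(b)=b+\sum_{(s,t)\in m_i}{\bf v}(\mathcal{I}_{T_i}(s,t))$, $\widetilde{e}_i(b)=b-\sum_{(s,t)\in M_i}{\bf v}(\mathcal{I}_{T_i}(s,t))$ (or ${\bf 0}$ if $\varepsilon_i(b)=0$), and similarly $\widetilde{f}_i^*,\widetilde{e}_i^*$ using $m_i^*,M_i^*,T_i^*$. (This bicrystal is shown in the paper to be isomorphic to Kashiwara's bicrystal $B(\infty)$ with its $*$-crystal structure.) Kashiwara–Park extended crystal: $\widehat{B}(\infty)$ is the set of ${\bf b}=(b^{(k)})_{k\in\mathbb{Z}}$ with $b^{(k)}\in B(\infty)$ and $b^{(k)}={\bf 1}$ for all but finitely many $k$, with $\widehat{\rm wt}({\bf b})=\sum_t(-1)^t{\rm wt}(b^{(t)})$, $\widehat{\varepsilon}_{(i,k)}({\bf b})=\varepsilon_i(b^{(k)})-\varepsilon_i^*(b^{(k+1)})$, $\widetilde{F}_{(i,k)}$ applying $\widetilde{f}_i$ to $b^{(k)}$ if $\widehat{\varepsilon}_{(i,k)}({\bf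 b})\ge0$ and $\widetilde{e}_i^*$ to $b^{(k+1)}$ otherwise, and $\widetilde{E}_{(i,k)}$ applying $\widetilde{e}_i$ to $b^{(k)}$ if $\widehat{\varepsilon}_{(i,k)}({\bf b})>0$ and $\widetilde{f}_i^*$ to $b^{(k+1)}$ otherwise. Combinatorial version: $\widehat{\mathcal{B}}(\infty)$ is the same kind of sequence set with entries in $\mathcal{B}(\infty)$. Let $\widehat{\Pi}_i=\Pi_i\cup\{\mu^*:\mu\in\Pi_i^*\}$ ordered by: $\lambda\le\mu^*$ always, $\lambda\le\lambda'$ iff $\lambda\subseteq\lambda'$, $\mu^*\le\nu^*$ iff $\mu\supseteq\nu$. Put $\widehat{\Gamma}^{(k)}_\lambda({\bf b})=\Gamma_\lambda(b^{(k)})$ and $\widehat{\Gamma}^{(k)}_{\mu^*}({\bf b})=\Gamma^*_\mu(b^{(k+1)})$; let $\widehat{m}_{(i,k)}({\bf b})$, $\widehat{M}_{(i,k)}({\bf b})$ be the minimal and maximal $\gamma\in\widehat{\Pi}_i$ attaining $\max_\gamma\widehat{\Gamma}^{(k)}_\gamma({\bf b})$. Define $\widehat{\rm wt}({\bf b})=\sum_t(-1)^t{\rm wt}(b^{(t)})$, $\widehat{\varepsilon}_{(i,k)}({\bf b})=\max_{\lambda\in\Pi_i}\widehat{\Gamma}^{(k)}_\lambda({\bf b})-\max_{\mu\in\Pi_i^*}\widehat{\Gamma}^{(k)}_{\mu^*}({\bf b})$, $\widetilde{E}_{(i,k)}({\bf b})={\bf b}-\sum_{(s,t)\in\lambda}{\bf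 v}(\mathcal{I}_{T_i}(s,t))^{(k)}$ if $\widehat{M}_{(i,k)}({\bf b})=\lambda$ is unstarred and ${\bf b}-\sum_{(s,t)\in\mu}{\bf v}(\mathcal{I}_{T_i^*}(s,t))^{(k+1)}$ if $\widehat{M}_{(i,k)}({\bf b})=\mu^*$, and $\widetilde{F}_{(i,k)}$ likewise with $+$ and $\widehat{m}_{(i,k)}$ (the superscript $(k)$ meaning the vector is placed in the $k$-th component). *)

theory Defs
  imports Main
begin

datatype ltype = TA | TB | TD

definition valid_type :: "ltype \<Rightarrow> nat \<Rightarrow> bool" where
  "valid_type X n = (case X of TA \<Rightarrow> 1 \<le> n | TB \<Rightarrow> 2 \<le> n | TD \<Rightarrow> 4 \<le> n)"

text \<open>Cartan integers cartan X n t k = <h_t, alpha_k>. Type B_n: alpha_n short.\<close>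
definition cartan :: "ltype \<Rightarrow> nat \<Rightarrow> nat \<Rightarrow> nat \<Rightarrow> int" where
  "cartan X n t k =
    (if t = k then 2 else
     (case X of
        TA \<Rightarrow> (if t = k + 1 \<or> k = t + 1 then -1 else 0)
      | TB \<Rightarrow> (if t = n \<and> k = n - 1 then -2
               else if t = k + 1 \<or> k = t + 1 then -1 else 0)
      | TD \<Rightarrow> (if {t, k} = {n - 1, n} then 0
               else if {t, k} = {n - 2, n} then -1
               else if t < n \<and> k < n \<and> (t = k + 1 \<or> k = t + 1) then -1 else 0)))"

text \<open>The finite index set I_n^X of coordinates (s,t) (s-th occurrence of t in iota_0).\<close>
definition Iset :: "ltype \<Rightarrow> nat \<Rightarrow> (nat \<times> nat) set" where
  "Iset X n = (case X of
      TA \<Rightarrow> {(s, t). 1 \<le> s \<and> 1 \<le> t \<and> t \<le> n \<and> s + t \<le> n + 1}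
    | TB \<Rightarrow> {(s, t). 1 \<le> s \<and> s \<le> n \<and> 1 \<le> t \<and> t \<le> n}
    | TD \<Rightarrow> {(s, t). 1 \<le> s \<and> s \<le> n - 1 \<and> 1 \<le> t \<and> t \<le> n})"

type_synonym vec = "nat \<times> nat \<Rightarrow> int"

definition xc :: "ltype \<Rightarrow> nat \<Rightarrow> vec \<Rightarrow> nat \<Rightarrow> nat \<Rightarrow> int" where
  "xc X n b s t = (if (s, t) \<in> Iset X n then b (s, t) else 0)"

definition ev :: "ltype \<Rightarrow> nat \<Rightarrow> nat \<times> nat \<Rightarrow> vec" where
  "ev X n q = (\<lambda>p. if p = q \<and> q \<in> Iset X n then 1 else 0)"

definition vv :: "ltype \<Rightarrow> nat \<Rightarrow> nat \<times> nat \<Rightarrow> vec" where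
  "vv X n q = (\<lambda>p. ev X n q p - (if fst q = 0 then 0 else ev X n (fst q - 1, snd q) p))"

definition beta :: "ltype \<Rightarrow> nat \<Rightarrow> nat \<Rightarrow> nat \<Rightarrow> vec \<Rightarrow> int" where
  "beta X n s t b = xc X n b s t
     + (\<Sum>k\<in>{t<..n}. cartan X n t k * xc X n b s k)
     + (\<Sum>k\<in>{1..<t}. cartan X n t k * xc X n b (s + 1) k)
     + xc X n b (s + 1) t"

text \<open>beta*_{s,t}; only used with s \<ge> 1 (x_{0,t} = 0 since (0,t) is not in I_n^X).\<close>
definition betaS :: "ltype \<Rightarrow> nat \<Rightarrow> nat \<Rightarrow> nat \<Rightarrow> vec \<Rightarrow> int" where
  "betaS X n s t b = xc X n b (s - 1) t
     + (\<Sum>k\<in>{t<..n}. cartan X n t k * xc X n b (s - 1) k)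
     + (\<Sum>k\<in>{1..<t}. cartan X n t k * xc X n b s k)
     + xc X n b s t"

text \<open>Cells are (row s, column t), both starting at 1.\<close>

definition Tlen :: "ltype \<Rightarrow> nat \<Rightarrow> nat \<Rightarrow> nat" where
  "Tlen X n i = (case X of TA \<Rightarrow> n + 1 - i | TB \<Rightarrow> n | TD \<Rightarrow> n - 1)"

definition Tshape :: "ltype \<Rightarrow> nat \<Rightarrow> nat \<Rightarrow> (nat \<times> nat) set" where
  "Tshape X n i = {(1, t) | t. 1 \<le> t \<and> t \<le> Tlen X n i}"

text \<open>Index I_{T_i}(s,t) of the beta in cell (s,t): T_i(1,t) = beta_{t,i}.\<close>
definition Tidx :: "ltype \<Rightarrow> nat \<Rightarrow> nat \<Rightarrow> nat \<times> nat \<Rightarrow> nat \<times> nat" where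
  "Tidx X n i c = (snd c, i)"

text \<open>Is T_i^* a staircase tableau (rather than a single row)?\<close>
definition stair :: "ltype \<Rightarrow> nat \<Rightarrow> nat \<Rightarrow> bool" where
  "stair X n i = (case X of TA \<Rightarrow> False | TB \<Rightarrow> i = n | TD \<Rightarrow> n - 1 \<le> i)"

definition TSshape :: "ltype \<Rightarrow> nat \<Rightarrow> nat \<Rightarrow> (nat \<times> nat) set" where
  "TSshape X n i =
    (if \<not> stair X n i then {(1, t) | t. 1 \<le> t \<and> t \<le> i}
     else (case X of
             TB \<Rightarrow> {(s, t). 1 \<le> s \<and> 1 \<le> t \<and> s + t \<le> n + 1}
           | _ \<Rightarrow> {(s, t). 1 \<le> s \<and> 1 \<le> t \<and> s + t \<le> n}))"

text \<open>Index I_{T_i^*}(s,t) of the beta* in cell (s,t).\<close>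
definition TSidx :: "ltype \<Rightarrow> nat \<Rightarrow> nat \<Rightarrow> nat \<times> nat \<Rightarrow> nat \<times> nat" where
  "TSidx X n i c =
    (let s = fst c; t = snd c in
     if \<not> stair X n i then (t, i + 1 - t)
     else (case X of
             TB \<Rightarrow> (if t = 1 then (s, n) else (s + t - 1, n + 1 - t))
           | _ \<Rightarrow> (if t = 1 then
                      (if (odd s \<longleftrightarrow> i = n - 1) then (s, n - 1) else (s, n))
                    else (s + t - 1, n - t))))"

definition TScoef :: "ltype \<Rightarrow> nat \<Rightarrow> nat \<Rightarrow> nat \<times> nat \<Rightarrow> int" where
  "TScoef X n i c = (if stair X n i \<and> X = TB \<and> snd c \<ge> 2 then 2 else 1)"

definition young :: "(nat \<times> nat) set \<Rightarrow> bool" where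
  "young \<mu> = (\<forall>s t. (s, t) \<in> \<mu> \<longrightarrow> 1 \<le> s \<and> 1 \<le> t \<and>
                 (\<forall>s' t'. 1 \<le> s' \<and> s' \<le> s \<and> 1 \<le> t' \<and> t' \<le> t \<longrightarrow> (s', t') \<in> \<mu>))"

definition rowlen :: "(nat \<times> nat) set \<Rightarrow> nat \<Rightarrow> nat" where
  "rowlen \<mu> s = card {t. (s, t) \<in> \<mu>}"

definition strict :: "(nat \<times> nat) set \<Rightarrow> bool" where
  "strict \<mu> = (\<forall>s\<ge>1. 0 < rowlen \<mu> (Suc s) \<longrightarrow> rowlen \<mu> (Suc s) < rowlen \<mu> s)"

definition Pi :: "ltype \<Rightarrow> nat \<Rightarrow> nat \<Rightarrow> (nat \<times> nat) set set" where
  "Pi X n i = {la. young la \<and> la \<subseteq> Tshape X n i \<and> la \<noteq> {}}"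

definition PiS :: "ltype \<Rightarrow> nat \<Rightarrow> nat \<Rightarrow> (nat \<times> nat) set set" where
  "PiS X n i = {\<mu>. young \<mu> \<and> strict \<mu> \<and> \<mu> \<subseteq> TSshape X n i \<and> \<mu> \<noteq> {}}"

text \<open>Gamma_lambda for lambda = (l): sum of beta_{s,i} for s from l to the length of T_i.\<close>
definition Gamma :: "ltype \<Rightarrow> nat \<Rightarrow> nat \<Rightarrow> (nat \<times> nat) set \<Rightarrow> vec \<Rightarrow> int" where
  "Gamma X n i la b = (\<Sum>s\<in>{card la..Tlen X n i}. beta X n s i b)"

definition GammaS :: "ltype \<Rightarrow> nat \<Rightarrow> nat \<Rightarrow> (nat \<times> nat) set \<Rightarrow> vec \<Rightarrow> int" where
  "GammaS X n i \<mu> b =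
     (\<Sum>c\<in>\<mu>. TScoef X n i c * betaS X n (fst (TSidx X n i c)) (snd (TSidx X n i c)) b)"

definition wt :: "ltype \<Rightarrow> nat \<Rightarrow> vec \<Rightarrow> nat \<Rightarrow> int" where
  \<comment> \<open>coefficient of alpha_t in wt(b) = - sum b_{s,t} alpha_t\<close>
  "wt X n b t = - (\<Sum>s\<in>{s. (s, t) \<in> Iset X n}. b (s, t))"

definition eps :: "ltype \<Rightarrow> nat \<Rightarrow> nat \<Rightarrow> vec \<Rightarrow> int" where
  "eps X n i b = Max ((\<lambda>la. Gamma X n i la b) ` Pi X n i)"

definition epsS :: "ltype \<Rightarrow> nat \<Rightarrow> nat \<Rightarrow> vec \<Rightarrow> int" where
  "epsS X n i b = Max ((\<lambda>\<mu>. GammaS X n i \<mu> b) ` PiS X n i)"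

definition minimal_in :: "'a set set \<Rightarrow> 'a set" where
  "minimal_in S = (THE la. la \<in> S \<and> (\<forall>\<mu>\<in>S. la \<subseteq> \<mu>))"

definition maximal_in :: "'a set set \<Rightarrow> 'a set" where
  "maximal_in S = (THE la. la \<in> S \<and> (\<forall>\<mu>\<in>S. \<mu> \<subseteq> la))"

definition mm :: "ltype \<Rightarrow> nat \<Rightarrow> nat \<Rightarrow> vec \<Rightarrow> (nat \<times> nat) set" where
  "mm X n i b = minimal_in {la\<in>Pi X n i. Gamma X n i la b = eps X n i b}"
definition MM :: "ltype \<Rightarrow> nat \<Rightarrow> nat \<Rightarrow> vec \<Rightarrow> (nat \<times> nat) set" where
  "MM X n i b = maximal_in {la\<in>Pi X n i. Gamma X n i la b = eps X n i b}"
definition mmS :: "ltype \<Rightarrow> nat \<Rightarrow> nat \<Rightarrow> vec \<Rightarrow> (nat \<times> nat) set" where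
  "mmS X n i b = minimal_in {\<mu>\<in>PiS X n i. GammaS X n i \<mu> b = epsS X n i b}"
definition MMS :: "ltype \<Rightarrow> nat \<Rightarrow> nat \<Rightarrow> vec \<Rightarrow> (nat \<times> nat) set" where
  "MMS X n i b = maximal_in {\<mu>\<in>PiS X n i. GammaS X n i \<mu> b = epsS X n i b}"

definition vsum :: "ltype \<Rightarrow> nat \<Rightarrow> (nat \<times> nat \<Rightarrow> nat \<times> nat) \<Rightarrow> (nat \<times> nat) set \<Rightarrow> vec" where
  "vsum X n idx la = (\<lambda>p. \<Sum>c\<in>la. vv X n (idx c) p)"

definition ftil :: "ltype \<Rightarrow> nat \<Rightarrow> nat \<Rightarrow> vec \<Rightarrow> vec" where
  "ftil X n i b = (\<lambda>p. b p + vsum X n (Tidx X n i) (mm X n i b) p)"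

text \<open>None plays the role of 0.\<close>
definition etil :: "ltype \<Rightarrow> nat \<Rightarrow> nat \<Rightarrow> vec \<Rightarrow> vec option" where
  "etil X n i b = (if eps X n i b = 0 then None
                   else Some (\<lambda>p. b p - vsum X n (Tidx X n i) (MM X n i b) p))"

definition ftilS :: "ltype \<Rightarrow> nat \<Rightarrow> nat \<Rightarrow> vec \<Rightarrow> vec" where
  "ftilS X n i b = (\<lambda>p. b p + vsum X n (TSidx X n i) (mmS X n i b) p)"

definition etilS :: "ltype \<Rightarrow> nat \<Rightarrow> nat \<Rightarrow> vec \<Rightarrow> vec option" where
  "etilS X n i b = (if epsS X n i b = 0 then None
                    else Some (\<lambda>p. b p - vsum X n (TSidx X n i) (MMS X n i b) p))"

text \<open>The polyhedral realization B(infinity): the vectors reachable from the zero vector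
  (the highest weight element 1) by the operators f_i.\<close>
inductive_set Binf :: "ltype \<Rightarrow> nat \<Rightarrow> vec set" for X n where
  zero: "(\<lambda>_. 0) \<in> Binf X n"
| step: "b \<in> Binf X n \<Longrightarrow> i \<in> {1..n} \<Longrightarrow> ftil X n i b \<in> Binf X n"

record 'b bicrystal =
  bwt :: "'b \<Rightarrow> nat \<Rightarrow> int"
  beps :: "nat \<Rightarrow> 'b \<Rightarrow> int"
  bepsS :: "nat \<Rightarrow> 'b \<Rightarrow> int"
  be :: "nat \<Rightarrow> 'b \<Rightarrow> 'b option"
  bf :: "nat \<Rightarrow> 'b \<Rightarrow> 'b option"
  beS :: "nat \<Rightarrow> 'b \<Rightarrow> 'b option"
  bfS :: "nat \<Rightarrow> 'b \<Rightarrow> 'b option"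

definition sgnp :: "int \<Rightarrow> int" where
  "sgnp t = (if even t then 1 else -1)"

definition kp_set :: "'b set \<Rightarrow> 'b \<Rightarrow> (int \<Rightarrow> 'b) set" where
  "kp_set B one = {bb. (\<forall>k. bb k \<in> B) \<and> finite {k. bb k \<noteq> one}}"

definition kp_wt :: "'b bicrystal \<Rightarrow> 'b \<Rightarrow> (int \<Rightarrow> 'b) \<Rightarrow> nat \<Rightarrow> int" where
  "kp_wt C one bb j = (\<Sum>t\<in>{t. bb t \<noteq> one}. sgnp t * bwt C (bb t) j)"

definition kp_eps :: "'b bicrystal \<Rightarrow> nat \<Rightarrow> int \<Rightarrow> (int \<Rightarrow> 'b) \<Rightarrow> int" where
  "kp_eps C i k bb = beps C i (bb k) - bepsS C i (bb (k + 1))"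

definition kp_F :: "'b bicrystal \<Rightarrow> nat \<Rightarrow> int \<Rightarrow> (int \<Rightarrow> 'b) \<Rightarrow> (int \<Rightarrow> 'b) option" where
  "kp_F C i k bb = (if kp_eps C i k bb \<ge> 0
      then map_option (\<lambda>c. bb(k := c)) (bf C i (bb k))
      else map_option (\<lambda>c. bb(k + 1 := c)) (beS C i (bb (k + 1))))"

definition kp_E :: "'b bicrystal \<Rightarrow> nat \<Rightarrow> int \<Rightarrow> (int \<Rightarrow> 'b) \<Rightarrow> (int \<Rightarrow> 'b) option" where
  "kp_E C i k bb = (if kp_eps C i k bb > 0
      then map_option (\<lambda>c. bb(k := c)) (be C i (bb k))
      else map_option (\<lambda>c. bb(k + 1 := c)) (bfS C i (bb (k + 1))))"

text \<open>The polyhedral bicrystal (identified with Kashiwara's B(infinity)).\<close>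
definition poly :: "ltype \<Rightarrow> nat \<Rightarrow> vec bicrystal" where
  "poly X n = \<lparr> bwt = wt X n, beps = eps X n, bepsS = epsS X n,
      be = etil X n, bf = (\<lambda>i b. Some (ftil X n i b)),
      beS = etilS X n, bfS = (\<lambda>i b. Some (ftilS X n i b)) \<rparr>"

definition Bhat :: "ltype \<Rightarrow> nat \<Rightarrow> (int \<Rightarrow> vec) set" where
  "Bhat X n = {bb. (\<forall>k. bb k \<in> Binf X n) \<and> finite {k. bb k \<noteq> (\<lambda>_. 0)}}"

text \<open>Inl lambda = unstarred lambda, Inr mu = mu^*.\<close>
definition PiHat :: "ltype \<Rightarrow> nat \<Rightarrow> nat \<Rightarrow> ((nat \<times> nat) set + (nat \<times> nat) set) set" where
  "PiHat X n i = Inl ` Pi X n i \<union> Inr ` PiS X n i"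

fun le_hat :: "'a set + 'a set \<Rightarrow> 'a set + 'a set \<Rightarrow> bool" where
  "le_hat (Inl a) (Inl b) = (a \<subseteq> b)"
| "le_hat (Inl a) (Inr b) = True"
| "le_hat (Inr a) (Inl b) = False"
| "le_hat (Inr a) (Inr b) = (b \<subseteq> a)"

definition GammaHat :: "ltype \<Rightarrow> nat \<Rightarrow> nat \<Rightarrow> int \<Rightarrow>
    (nat \<times> nat) set + (nat \<times> nat) set \<Rightarrow> (int \<Rightarrow> vec) \<Rightarrow> int" where
  "GammaHat X n i k \<gamma> bb = (case \<gamma> of Inl la \<Rightarrow> Gamma X n i la (bb k)
                                    | Inr \<mu> \<Rightarrow> GammaS X n i \<mu> (bb (k + 1)))"

definition attHat :: "ltype \<Rightarrow> nat \<Rightarrow> nat \<Rightarrow> int \<Rightarrow> (int \<Rightarrow> vec) \<Rightarrow>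
    ((nat \<times> nat) set + (nat \<times> nat) set) set" where
  "attHat X n i k bb = {\<gamma>\<in>PiHat X n i. GammaHat X n i k \<gamma> bb =
       Max ((\<lambda>\<delta>. GammaHat X n i k \<delta> bb) ` PiHat X n i)}"

definition mHat where
  "mHat X n i k bb = (THE \<gamma>. \<gamma> \<in> attHat X n i k bb \<and> (\<forall>\<delta>\<in>attHat X n i k bb. le_hat \<gamma> \<delta>))"

definition MHat where
  "MHat X n i k bb = (THE \<gamma>. \<gamma> \<in> attHat X n i k bb \<and> (\<forall>\<delta>\<in>attHat X n i k bb. le_hat \<delta> \<gamma>))"

definition wtHat :: "ltype \<Rightarrow> nat \<Rightarrow> (int \<Rightarrow> vec) \<Rightarrow> nat \<Rightarrow> int" where
  "wtHat X n bb j = (\<Sum>t\<in>{t. bb t \<noteq> (\<lambda>_. 0)}. sgnp t * wt X n (bb t) j)"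

definition epsHat :: "ltype \<Rightarrow> nat \<Rightarrow> nat \<Rightarrow> int \<Rightarrow> (int \<Rightarrow> vec) \<Rightarrow> int" where
  "epsHat X n i k bb =
     Max ((\<lambda>la. GammaHat X n i k (Inl la) bb) ` Pi X n i)
   - Max ((\<lambda>\<mu>. GammaHat X n i k (Inr \<mu>) bb) ` PiS X n i)"

definition EHat :: "ltype \<Rightarrow> nat \<Rightarrow> nat \<Rightarrow> int \<Rightarrow> (int \<Rightarrow> vec) \<Rightarrow> (int \<Rightarrow> vec)" where
  "EHat X n i k bb = (case MHat X n i k bb of
      Inl la \<Rightarrow> bb(k := (\<lambda>p. bb k p - vsum X n (Tidx X n i) la p))
    | Inr \<mu> \<Rightarrow> bb(k + 1 := (\<lambda>p. bb (k + 1) p + vsum X n (TSidx X n i) \<mu> p)))"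

definition FHat :: "ltype \<Rightarrow> nat \<Rightarrow> nat \<Rightarrow> int \<Rightarrow> (int \<Rightarrow> vec) \<Rightarrow> (int \<Rightarrow> vec)" where
  "FHat X n i k bb = (case mHat X n i k bb of
      Inl la \<Rightarrow> bb(k := (\<lambda>p. bb k p + vsum X n (Tidx X n i) la p))
    | Inr \<mu> \<Rightarrow> bb(k + 1 := (\<lambda>p. bb (k + 1) p - vsum X n (TSidx X n i) \<mu> p)))"

end

theory Submission
  imports Defs
begin

text \<open>
  Once least and greatest maximizers are known to exist, the extended operators reduce to
  comparing two numbers. The maximum of \<open>GammaHat\<close> over \<open>PiHat\<close> is the larger of
  \<open>eps\<close> at \<open>b(k)\<close> and \<open>epsS\<close> at \<open>b(k+1)\<close>, and every starred partition lies above every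
  unstarred one, so the greatest (least) maximizer is unstarred exactly when \<open>eps > epsS\<close>
  (\<open>eps \<ge> epsS\<close>), which is the case distinction of Kashiwara and Park. The maximizers exist
  because the rows form a chain and the strict partitions a lattice on which \<open>GammaS\<close> is
  modular. It remains to see that \<open>etil\<close> and \<open>etilS\<close> do not return \<open>None\<close> in the case
  where they are used, i.e. that \<open>eps\<close> and \<open>epsS\<close> are nonnegative on \<open>B(\<infinity>)\<close>.

  For \<open>epsS\<close>: the full shape of \<open>T_i\<^sup>*\<close> is a strict partition, and its \<open>GammaS\<close> telescopes
  along antidiagonals to a single coordinate. For \<open>eps\<close>: the last row \<open>L\<close> of \<open>T_i\<close> gives
  \<open>eps \<ge> beta L i\<close>, and \<open>beta L i \<ge> 0\<close> follows from linear inequalities that hold at \<open>0\<close>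
  and are preserved by every \<open>f_j\<close>. Indeed \<open>f_j\<close> raises the single coordinate \<open>(m, j)\<close>,
  where \<open>m\<close> is the least maximizing row, and minimality of \<open>m\<close> gives
  \<open>beta (m - 1) j < 0\<close>, which is exactly the slack the inequalities need.
\<close>

section \<open>One-row partitions and the maximizers of \<open>Gamma\<close>\<close>

lemma Iset_bounds: "(s, t) \<in> Iset X n \<Longrightarrow> 1 \<le> s \<and> 1 \<le> t \<and> t \<le> n"
  by (auto simp: Iset_def split: ltype.splits)

lemma xc_notin_Iset: "(s, t) \<notin> Iset X n \<Longrightarrow> xc X n b s t = 0"
  by (simp add: xc_def)

lemma xc_outside [simp]:
  "xc X n b 0 t = 0" "xc X n b s 0 = 0" "n < t \<Longrightarrow> xc X n b s t = 0"
  by (auto simp: xc_def dest: Iset_bounds)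

lemma xc_zero_vec [simp]: "xc X n (\<lambda>_. 0) s t = 0"
  by (simp add: xc_def)

lemma betaS_eq_beta: "1 \<le> s \<Longrightarrow> betaS X n s t b = beta X n (s - 1) t b"
  by (simp add: betaS_def beta_def)

lemma Tlen_pos: "valid_type X n \<Longrightarrow> i \<in> {1..n} \<Longrightarrow> 1 \<le> Tlen X n i"
  by (auto simp: valid_type_def Tlen_def split: ltype.splits)

lemma Tlen_in_Iset: "valid_type X n \<Longrightarrow> i \<in> {1..n} \<Longrightarrow> m \<in> {1..Tlen X n i} \<Longrightarrow> (m, i) \<in> Iset X n"
  by (auto simp: Iset_def Tlen_def valid_type_def split: ltype.splits)

definition row :: "nat \<Rightarrow> (nat \<times> nat) set" where
  "row r = {(1, t) | t. 1 \<le> t \<and> t \<le> r}"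

lemma row_eq_image: "row r = (\<lambda>t. (1, t)) ` {1..r}"
  by (auto simp: row_def)

lemma finite_row [simp]: "finite (row r)"
  by (simp add: row_eq_image)

lemma card_row [simp]: "card (row r) = r"
  by (simp add: row_eq_image card_image inj_on_def)

lemma row_subset_iff [simp]: "row r \<subseteq> row r' \<longleftrightarrow> r \<le> r'"
proof
  show "row r \<subseteq> row r' \<Longrightarrow> r \<le> r'"
    using card_mono[OF finite_row, of "row r" r'] by simp
qed (auto simp: row_def)

lemma row_Suc: "row (Suc r) = insert (1, Suc r) (row r)"
  by (auto simp: row_def)

lemma Tshape_eq_row: "Tshape X n i = row (Tlen X n i)"
  by (simp add: Tshape_def row_def)

lemma young_pos: "young \<mu> \<Longrightarrow> (s, t) \<in> \<mu> \<Longrightarrow> 1 \<le> s \<and> 1 \<le> t"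
  unfolding young_def by blast

lemma young_down: "young \<mu> \<Longrightarrow> (s, t) \<in> \<mu> \<Longrightarrow> 1 \<le> s' \<Longrightarrow> s' \<le> s \<Longrightarrow> 1 \<le> t' \<Longrightarrow> t' \<le> t \<Longrightarrow> (s', t') \<in> \<mu>"
  unfolding young_def by blast

lemma young_subset_row:
  assumes young: "young la" and sub: "la \<subseteq> row N"
  shows "la = row (card la)"
proof -
  have "\<exists>r. la = row r"
  proof (cases "la = {}")
    case True
    then show ?thesis by (auto simp: row_def)
  next
    case False
    have fin: "finite (snd ` la)"
      using finite_subset[OF sub] by simp
    define r where "r = Max (snd ` la)"
    have "(1, r) \<in> la"
      using Max_in[OF fin] False sub unfolding r_def by (auto simp: row_def)
    then have "row r \<subseteq> la"
      by (auto simp: row_def intro: young_down[OF young])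
    moreover have "la \<subseteq> row r"
    proof
      fix c assume c: "c \<in> la"
      then obtain t where t: "c = (1, t)" "1 \<le> t"
        using sub by (auto simp: row_def)
      then have "t \<le> r"
        unfolding r_def using c by (intro Max_ge[OF fin]) force
      with t show "c \<in> row r" by (simp add: row_def)
    qed
    ultimately show ?thesis by blast
  qed
  then show ?thesis by auto
qed

lemma young_row: "young (row r)"
  by (auto simp: young_def row_def)

lemma Pi_eq_rows: "Pi X n i = row ` {1..Tlen X n i}"
proof
  show "Pi X n i \<subseteq> row ` {1..Tlen X n i}"
  proof
    fix la assume "la \<in> Pi X n i"
    then have young: "young la" and sub: "la \<subseteq> row (Tlen X n i)" and "la \<noteq> {}"
      by (auto simp: Pi_def Tshape_eq_row)
    moreover have "la = row (card la)"
      using young sub by (rule young_subset_row)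
    ultimately have "card la \<in> {1..Tlen X n i}"
      using finite_subset[OF sub] row_subset_iff[of "card la" "Tlen X n i"]
      by (auto simp: Suc_le_eq card_gt_0_iff)
    with \<open>la = row (card la)\<close> show "la \<in> row ` {1..Tlen X n i}"
      by blast
  qed
  show "row ` {1..Tlen X n i} \<subseteq> Pi X n i"
    using young_row by (auto simp: Pi_def Tshape_eq_row row_eq_image)
qed

lemma finite_Pi: "finite (Pi X n i)"
  by (simp add: Pi_eq_rows)

lemma Pi_nonempty: "valid_type X n \<Longrightarrow> i \<in> {1..n} \<Longrightarrow> Pi X n i \<noteq> {}"
  using Tlen_pos by (auto simp: Pi_eq_rows)

lemma Gamma_row_Suc:
  "r \<le> Tlen X n i \<Longrightarrow> Gamma X n i (row r) b = beta X n r i b + Gamma X n i (row (Suc r)) b"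
  by (simp add: Gamma_def atLeastAtMost_insertL[symmetric])

lemma Inter_mem_if_Int_closed:
  assumes "finite F" "F \<noteq> {}" "F \<subseteq> S" "\<And>a b. a \<in> S \<Longrightarrow> b \<in> S \<Longrightarrow> a \<inter> b \<in> S"
  shows "\<Inter>F \<in> S"
  using assms by (induction F rule: finite_ne_induct) auto

lemma Union_mem_if_Un_closed:
  assumes "finite F" "F \<noteq> {}" "F \<subseteq> S" "\<And>a b. a \<in> S \<Longrightarrow> b \<in> S \<Longrightarrow> a \<union> b \<in> S"
  shows "\<Union>F \<in> S"
  using assms by (induction F rule: finite_ne_induct) auto

lemma minimal_in_least:
  assumes "finite S" "S \<noteq> {}" "\<And>a b. a \<in> S \<Longrightarrow> b \<in> S \<Longrightarrow> a \<inter> b \<in> S"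
  shows "minimal_in S \<in> S" "\<And>a. a \<in> S \<Longrightarrow> minimal_in S \<subseteq> a"
proof -
  have "\<Inter>S \<in> S"
    using Inter_mem_if_Int_closed[OF assms(1,2) order_refl assms(3)] .
  moreover from this have "minimal_in S = \<Inter>S"
    unfolding minimal_in_def by (intro the_equality) blast+
  ultimately show "minimal_in S \<in> S" "\<And>a. a \<in> S \<Longrightarrow> minimal_in S \<subseteq> a"
    by auto
qed

lemma maximal_in_greatest:
  assumes "finite S" "S \<noteq> {}" "\<And>a b. a \<in> S \<Longrightarrow> b \<in> S \<Longrightarrow> a \<union> b \<in> S"
  shows "maximal_in S \<in> S" "\<And>a. a \<in> S \<Longrightarrow> a \<subseteq> maximal_in S"
proof -
  have "\<Union>S \<in> S"
    using Union_mem_if_Un_closed[OF assms(1,2) order_refl assms(3)] .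
  moreover from this have "maximal_in S = \<Union>S"
    unfolding maximal_in_def by (intro the_equality) blast+
  ultimately show "maximal_in S \<in> S" "\<And>a. a \<in> S \<Longrightarrow> a \<subseteq> maximal_in S"
    by auto
qed

definition Gamma_argmax :: "ltype \<Rightarrow> nat \<Rightarrow> nat \<Rightarrow> vec \<Rightarrow> (nat \<times> nat) set set" where
  "Gamma_argmax X n i b = {la \<in> Pi X n i. Gamma X n i la b = eps X n i b}"

lemma Gamma_le_eps: "la \<in> Pi X n i \<Longrightarrow> Gamma X n i la b \<le> eps X n i b"
  unfolding eps_def using finite_Pi by (intro Max_ge) auto

lemma eps_attained:
  assumes "valid_type X n" "i \<in> {1..n}"
  obtains la where "la \<in> Pi X n i" "Gamma X n i la b = eps X n i b"
proof -
  have "eps X n i b \<in> (\<lambda>la. Gamma X n i la b) ` Pi X n i"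
    unfolding eps_def using finite_Pi Pi_nonempty[OF assms] by (intro Max_in) auto
  then obtain la where "la \<in> Pi X n i" "eps X n i b = Gamma X n i la b"
    by (rule imageE)
  then show ?thesis
    by (intro that) simp_all
qed

lemma Pi_chain:
  assumes "la \<in> Pi X n i" "la' \<in> Pi X n i"
  shows "la \<subseteq> la' \<or> la' \<subseteq> la"
proof -
  obtain r r' where "la = row r" "la' = row r'"
    using assms by (auto simp: Pi_eq_rows)
  then show ?thesis
    using nat_le_linear[of r r'] by simp
qed

lemma Gamma_argmax_lattice:
  assumes "valid_type X n" "i \<in> {1..n}"
  shows "finite (Gamma_argmax X n i b)" "Gamma_argmax X n i b \<noteq> {}"
    and "\<And>la la'. la \<in> Gamma_argmax X n i b \<Longrightarrow> la' \<in> Gamma_argmax X n i b \<Longrightarrow> la \<inter> la' \<in> Gamma_argmax X n i b"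
    and "\<And>la la'. la \<in> Gamma_argmax X n i b \<Longrightarrow> la' \<in> Gamma_argmax X n i b \<Longrightarrow> la \<union> la' \<in> Gamma_argmax X n i b"
proof -
  show "finite (Gamma_argmax X n i b)"
    using finite_Pi by (simp add: Gamma_argmax_def)
  show "Gamma_argmax X n i b \<noteq> {}"
    using eps_attained[OF assms] by (auto simp: Gamma_argmax_def)
  fix la la' assume "la \<in> Gamma_argmax X n i b" "la' \<in> Gamma_argmax X n i b"
  moreover from this have "la \<subseteq> la' \<or> la' \<subseteq> la"
    by (intro Pi_chain) (auto simp: Gamma_argmax_def)
  ultimately show "la \<inter> la' \<in> Gamma_argmax X n i b" "la \<union> la' \<in> Gamma_argmax X n i b"
    by (auto simp: Int_absorb1 Int_absorb2 Un_absorb1 Un_absorb2)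
qed

lemma mm_least:
  assumes "valid_type X n" "i \<in> {1..n}"
  shows "mm X n i b \<in> Gamma_argmax X n i b" "\<And>la. la \<in> Gamma_argmax X n i b \<Longrightarrow> mm X n i b \<subseteq> la"
  unfolding mm_def Gamma_argmax_def[symmetric]
  using minimal_in_least[OF Gamma_argmax_lattice(1-3)[OF assms]] by blast+

lemma MM_greatest:
  assumes "valid_type X n" "i \<in> {1..n}"
  shows "MM X n i b \<in> Gamma_argmax X n i b" "\<And>la. la \<in> Gamma_argmax X n i b \<Longrightarrow> la \<subseteq> MM X n i b"
  unfolding MM_def Gamma_argmax_def[symmetric]
  using maximal_in_greatest[OF Gamma_argmax_lattice(1,2,4)[OF assms]] by blast+

section \<open>The operator \<open>f_j\<close> raises a single coordinate\<close>

lemma vsum_row: "vsum X n (Tidx X n i) (row r) = ev X n (r, i)"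
proof (induction r)
  case 0
  show ?case
    by (auto simp: vsum_def row_def ev_def fun_eq_iff dest: Iset_bounds)
next
  case (Suc r)
  have "(1, Suc r) \<notin> row r"
    by (simp add: row_def)
  then have "vsum X n (Tidx X n i) (row (Suc r)) = (\<lambda>p. vv X n (Suc r, i) p + vsum X n (Tidx X n i) (row r) p)"
    by (simp add: vsum_def row_Suc Tidx_def)
  with Suc show ?case
    by (simp add: vv_def fun_eq_iff)
qed

text \<open>\<open>m\<close> is the least row attaining \<open>eps X n j b\<close>; its minimality is what makes
  \<open>beta X n (m - 1) j b\<close> negative.\<close>

locale ftil_step =
  fixes X :: ltype and n j m :: nat and b :: vec
  assumes xc_ftil: "\<And>s t. xc X n (ftil X n j b) s t = xc X n b s t + (if (s, t) = (m, j) then 1 else 0)"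
    and beta_before_neg: "2 \<le> m \<Longrightarrow> beta X n (m - 1) j b < 0"

lemma ftil_stepI:
  assumes valid: "valid_type X n" and j: "j \<in> {1..n}"
  obtains m where "ftil_step X n j m b"
proof -
  obtain m where m: "m \<in> {1..Tlen X n j}" "mm X n j b = row m"
    using mm_least(1)[OF valid j, of b] by (auto simp: Gamma_argmax_def Pi_eq_rows)
  have "xc X n (ftil X n j b) s t = xc X n b s t + (if (s, t) = (m, j) then 1 else 0)" for s t
    using Tlen_in_Iset[OF valid j m(1)]
    by (auto simp: ftil_def m(2) vsum_row xc_def ev_def)
  moreover have "beta X n (m - 1) j b < 0" if "2 \<le> m"
  proof -
    have prev: "row (m - 1) \<in> Pi X n j"
      using m(1) that unfolding Pi_eq_rows by (intro imageI) auto
    have "row (m - 1) \<notin> Gamma_argmax X n j b"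
      using mm_least(2)[OF valid j, of "row (m - 1)" b] m(2) that by auto
    then have "Gamma X n j (row (m - 1)) b < eps X n j b"
      using Gamma_le_eps[OF prev, of b] prev by (auto simp: Gamma_argmax_def)
    moreover have "Gamma X n j (row m) b = eps X n j b"
      using mm_least(1)[OF valid j, of b] m(2) by (simp add: Gamma_argmax_def)
    moreover have "Gamma X n j (row (m - 1)) b = beta X n (m - 1) j b + Gamma X n j (row m) b"
      using Gamma_row_Suc[of "m - 1" X n j b] m(1) that by simp
    ultimately show ?thesis by simp
  qed
  ultimately show ?thesis
    by (intro that) (unfold_locales)
qed

context ftil_step
begin

abbreviation x where "x \<equiv> xc X n b"
abbreviation y where "y \<equiv> xc X n (ftil X n j b)"

lemma x_le_y: "x s t \<le> y s t"
  by (simp add: xc_ftil)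

lemma preserves_le:
  assumes "x s t \<le> x s' t'" and "(s, t) = (m, j) \<Longrightarrow> x s t < x s' t'"
  shows "y s t \<le> y s' t'"
  using assms xc_ftil[of s t] x_le_y[of s' t'] by (auto split: if_splits)

lemma beta_neg_if_hit: "1 \<le> s \<Longrightarrow> (s + 1, t) = (m, j) \<Longrightarrow> beta X n s j b < 0"
  using beta_before_neg by auto

end

section \<open>Expansions of \<open>beta\<close>\<close>

definition chain_node :: "ltype \<Rightarrow> nat \<Rightarrow> nat \<Rightarrow> bool" where
  "chain_node X n u \<longleftrightarrow> u \<le> n \<and>
     (\<forall>k\<in>{1..n}. k \<noteq> u \<longrightarrow> cartan X n u k = (if k = u + 1 \<or> k + 1 = u then -1 else 0))"

lemma beta_chain_node:
  assumes "chain_node X n u"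
  shows "beta X n s u b =
    xc X n b s u - xc X n b s (u + 1) - xc X n b (s + 1) (u - 1) + xc X n b (s + 1) u"
proof -
  have "(\<Sum>k\<in>{u<..n}. cartan X n u k * xc X n b s k) = (\<Sum>k\<in>{u<..n}. if k = u + 1 then - xc X n b s (u + 1) else 0)"
    using assms by (intro sum.cong) (auto simp: chain_node_def)
  also have "\<dots> = - xc X n b s (u + 1)"
    by (cases "u + 1 \<le> n") simp_all
  finally have upper: "(\<Sum>k\<in>{u<..n}. cartan X n u k * xc X n b s k) = - xc X n b s (u + 1)" .
  have "(\<Sum>k\<in>{1..<u}. cartan X n u k * xc X n b (s + 1) k) = (\<Sum>k\<in>{1..<u}. if k = u - 1 then - xc X n b (s + 1) (u - 1) else 0)"
    using assms by (intro sum.cong) (auto simp: chain_node_def)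
  also have "\<dots> = - xc X n b (s + 1) (u - 1)"
    by (cases "2 \<le> u") simp_all
  finally have lower: "(\<Sum>k\<in>{1..<u}. cartan X n u k * xc X n b (s + 1) k) = - xc X n b (s + 1) (u - 1)" .
  show ?thesis
    unfolding beta_def upper lower by simp
qed

lemma chain_node_A: "u \<le> n \<Longrightarrow> chain_node TA n u"
  by (auto simp: chain_node_def cartan_def)

lemma chain_node_B: "u < n \<Longrightarrow> chain_node TB n u"
  by (auto simp: chain_node_def cartan_def)

lemma chain_node_D: "u + 3 \<le> n \<Longrightarrow> chain_node TD n u"
  by (auto simp: chain_node_def cartan_def doubleton_eq_iff)

lemma beta_B_last:
  assumes "2 \<le> n"
  shows "beta TB n s n b = xc TB n b s n - 2 * xc TB n b (s + 1) (n - 1) + xc TB n b (s + 1) n"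
proof -
  have "(\<Sum>k\<in>{1..<n}. cartan TB n n k * xc TB n b (s + 1) k) =
      (\<Sum>k\<in>{1..<n}. if k = n - 1 then - 2 * xc TB n b (s + 1) (n - 1) else 0)"
    by (intro sum.cong) (auto simp: cartan_def)
  also have "\<dots> = - 2 * xc TB n b (s + 1) (n - 1)"
    using assms by simp
  finally show ?thesis
    by (simp add: beta_def)
qed

lemma beta_D_branch:
  assumes "4 \<le> n"
  shows "beta TD n s (n - 2) b = xc TD n b s (n - 2) - xc TD n b s (n - 1) - xc TD n b s n
    - xc TD n b (s + 1) (n - 3) + xc TD n b (s + 1) (n - 2)"
proof -
  have "{n - 2<..n} = {n - 1, n}"
    using assms by auto
  moreover have "cartan TD n (n - 2) (n - 1) = -1" "cartan TD n (n - 2) n = -1"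
    using assms by (auto simp: cartan_def doubleton_eq_iff)
  ultimately have upper: "(\<Sum>k\<in>{n - 2<..n}. cartan TD n (n - 2) k * xc TD n b s k)
      = - xc TD n b s (n - 1) - xc TD n b s n"
    using assms by simp
  have "(\<Sum>k\<in>{1..<n - 2}. cartan TD n (n - 2) k * xc TD n b (s + 1) k) =
      (\<Sum>k\<in>{1..<n - 2}. if k = n - 3 then - xc TD n b (s + 1) (n - 3) else 0)"
    using assms by (intro sum.cong) (auto simp: cartan_def doubleton_eq_iff)
  also have "\<dots> = - xc TD n b (s + 1) (n - 3)"
    using assms by (subst sum.delta) auto
  finally show ?thesis
    using upper by (simp add: beta_def)
qed

lemma cartan_D_spin:
  assumes "4 \<le> n" and "u = n - 1 \<or> u = n" and "k < u"
  shows "cartan TD n u k = (if k = n - 2 then -1 else 0)"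
  using assms unfolding cartan_def by (auto simp: doubleton_eq_iff)

lemma beta_D_spin:
  assumes "4 \<le> n" and "u = n - 1 \<or> u = n"
  shows "beta TD n s u b = xc TD n b s u - xc TD n b (s + 1) (n - 2) + xc TD n b (s + 1) u"
proof -
  have upper: "(\<Sum>k\<in>{u<..n}. cartan TD n u k * xc TD n b s k) = 0"
    using assms by (intro sum.neutral) (auto simp: cartan_def doubleton_eq_iff)
  have "(\<Sum>k\<in>{1..<u}. cartan TD n u k * xc TD n b (s + 1) k) =
      (\<Sum>k\<in>{1..<u}. if k = n - 2 then - xc TD n b (s + 1) (n - 2) else 0)"
    using assms by (intro sum.cong) (simp_all add: cartan_D_spin)
  also have "\<dots> = - xc TD n b (s + 1) (n - 2)"
    using assms by (subst sum.delta) auto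
  finally show ?thesis
    using upper by (simp add: beta_def)
qed

section \<open>A cone containing \<open>B(\<infinity>)\<close>\<close>

definition nonneg :: "ltype \<Rightarrow> nat \<Rightarrow> vec \<Rightarrow> bool" where
  "nonneg X n b \<longleftrightarrow> (\<forall>s t. 0 \<le> xc X n b s t)"

definition diag_mono :: "ltype \<Rightarrow> nat \<Rightarrow> nat \<Rightarrow> vec \<Rightarrow> bool" where
  "diag_mono X n N b \<longleftrightarrow>
     (\<forall>s t. 1 \<le> s \<longrightarrow> 2 \<le> t \<longrightarrow> t \<le> N \<longrightarrow> xc X n b (s + 1) (t - 1) \<le> xc X n b s t)"

definition row_mono :: "ltype \<Rightarrow> nat \<Rightarrow> nat \<Rightarrow> nat \<Rightarrow> vec \<Rightarrow> bool" where
  "row_mono X n K N b \<longleftrightarrow>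
     (\<forall>s t. K \<le> s + t \<longrightarrow> 1 \<le> t \<longrightarrow> t < N \<longrightarrow> xc X n b s (t + 1) \<le> xc X n b s t)"

lemma diag_monoD:
  "diag_mono X n N b \<Longrightarrow> 1 \<le> s \<Longrightarrow> 2 \<le> t \<Longrightarrow> t \<le> N \<Longrightarrow> xc X n b (s + 1) (t - 1) \<le> xc X n b s t"
  by (simp add: diag_mono_def)

lemma row_monoD:
  "row_mono X n K N b \<Longrightarrow> K \<le> s + t \<Longrightarrow> 1 \<le> t \<Longrightarrow> t < N \<Longrightarrow> xc X n b s (t + 1) \<le> xc X n b s t"
  by (simp add: row_mono_def)

definition spin_mono :: "nat \<Rightarrow> vec \<Rightarrow> bool" where
  "spin_mono n b \<longleftrightarrow>
     (\<forall>s\<ge>1. xc TD n b (s + 1) n \<le> xc TD n b s (n - 1)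
        \<and> xc TD n b (s + 1) (n - 1) \<le> xc TD n b s n
        \<and> xc TD n b (s + 1) (n - 2) \<le> xc TD n b s (n - 1) + xc TD n b s n)
   \<and> (\<forall>s\<ge>2. xc TD n b s (n - 1) + xc TD n b s n \<le> xc TD n b s (n - 2))"

text \<open>Inequalities valid on all of \<open>B(\<infinity>)\<close>, chosen just strong enough to force
  \<open>beta\<close> on the last row of \<open>T_i\<close> to be nonnegative and to be preserved by every \<open>f_j\<close>.\<close>

definition in_cone :: "ltype \<Rightarrow> nat \<Rightarrow> vec \<Rightarrow> bool" where
  "in_cone X n b \<longleftrightarrow> nonneg X n b \<and>
     (case X of
        TA \<Rightarrow> diag_mono TA n n b
      | TB \<Rightarrow> diag_mono TB n n b \<and> row_mono TB n (n + 1) n b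
      | TD \<Rightarrow> diag_mono TD n (n - 2) b \<and> row_mono TD n n (n - 2) b \<and> spin_mono n b)"

context ftil_step
begin

lemma nonneg_ftil: "nonneg X n b \<Longrightarrow> nonneg X n (ftil X n j b)"
  unfolding nonneg_def using x_le_y order_trans by blast

lemma diag_mono_ftil:
  assumes chain: "\<And>u. 1 \<le> u \<Longrightarrow> u < N \<Longrightarrow> chain_node X n u"
    and nonneg: "nonneg X n b" and diag: "diag_mono X n N b"
  shows "diag_mono X n N (ftil X n j b)"
  unfolding diag_mono_def
proof (intro allI impI)
  fix s t :: nat
  assume s: "1 \<le> s" and t: "2 \<le> t" "t \<le> N"
  show "y (s + 1) (t - 1) \<le> y s t"
  proof (rule preserves_le)
    show "x (s + 1) (t - 1) \<le> x s t"
      using diag_monoD[OF diag s t] .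
    assume "(s + 1, t - 1) = (m, j)"
    then have "beta X n s (t - 1) b < 0"
      using beta_before_neg s by auto
    moreover have "beta X n s (t - 1) b = x s (t - 1) - x s t - x (s + 1) (t - 2) + x (s + 1) (t - 1)"
      using beta_chain_node[OF chain, of "t - 1"] t by (simp add: numeral_2_eq_2)
    moreover have "x (s + 1) (t - 2) \<le> x s (t - 1)"
    proof (cases "t = 2")
      case True
      then show ?thesis using nonneg by (simp add: nonneg_def)
    next
      case False
      then show ?thesis
        using diag_monoD[OF diag s, of "t - 1"] t by (simp add: numeral_2_eq_2)
    qed
    ultimately show "x (s + 1) (t - 1) < x s t"
      by simp
  qed
qed

lemma row_mono_ftil:
  assumes chain: "\<And>u. 1 \<le> u \<Longrightarrow> u < N \<Longrightarrow> chain_node X n u" and "N < K"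
    and last: "\<And>s. 2 \<le> s \<Longrightarrow> K \<le> s + N - 1 \<Longrightarrow> beta X n (s - 1) N b < 0 \<Longrightarrow> x s N < x s (N - 1)"
    and row: "row_mono X n K N b"
  shows "row_mono X n K N (ftil X n j b)"
  unfolding row_mono_def
proof (intro allI impI)
  fix s t :: nat
  assume st: "K \<le> s + t" and t: "1 \<le> t" "t < N"
  show "y s (t + 1) \<le> y s t"
  proof (rule preserves_le)
    show "x s (t + 1) \<le> x s t"
      using row_monoD[OF row st t] .
    assume "(s, t + 1) = (m, j)"
    moreover have s: "2 \<le> s"
      using st t \<open>N < K\<close> by simp
    ultimately have neg: "beta X n (s - 1) (t + 1) b < 0"
      using beta_before_neg by auto
    show "x s (t + 1) < x s t"
    proof (cases "t + 1 < N")
      case True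
      have "beta X n (s - 1) (t + 1) b = x (s - 1) (t + 1) - x (s - 1) (t + 2) - x s t + x s (t + 1)"
        using beta_chain_node[OF chain, of "t + 1"] True s by simp
      moreover have "x (s - 1) (t + 2) \<le> x (s - 1) (t + 1)"
        using row_monoD[OF row, of "s - 1" "t + 1"] st True s by simp
      ultimately show ?thesis
        using neg by simp
    next
      case False
      then have "N = t + 1" using t by simp
      then show ?thesis
        using last[of s] neg s st by simp
    qed
  qed
qed

end

lemma spin_mono_ftil_adjacent_rows:
  assumes step: "ftil_step TD n j m b" and n: "4 \<le> n" and s: "1 \<le> s"
    and diag: "diag_mono TD n (n - 2) b" and spin: "spin_mono n b"
  shows "xc TD n (ftil TD n j b) (s + 1) n \<le> xc TD n (ftil TD n j b) s (n - 1)"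
    and "xc TD n (ftil TD n j b) (s + 1) (n - 1) \<le> xc TD n (ftil TD n j b) s n"
    and "xc TD n (ftil TD n j b) (s + 1) (n - 2) \<le> xc TD n (ftil TD n j b) s (n - 1) + xc TD n (ftil TD n j b) s n"
proof -
  interpret ftil_step TD n j m b by (rule step)
  have spin1: "x (s + 1) n \<le> x s (n - 1)" and spin2: "x (s + 1) (n - 1) \<le> x s n"
    and spin3: "x (s + 1) (n - 2) \<le> x s (n - 1) + x s n"
    using spin s by (auto simp: spin_mono_def)
  show "y (s + 1) n \<le> y s (n - 1)"
  proof (rule preserves_le)
    show "x (s + 1) n \<le> x s (n - 1)" by (fact spin1)
    assume "(s + 1, n) = (m, j)"
    then show "x (s + 1) n < x s (n - 1)"
      using beta_neg_if_hit[OF s] beta_D_spin[OF n, of n s b] spin3 by auto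
  qed
  show "y (s + 1) (n - 1) \<le> y s n"
  proof (rule preserves_le)
    show "x (s + 1) (n - 1) \<le> x s n" by (fact spin2)
    assume "(s + 1, n - 1) = (m, j)"
    then show "x (s + 1) (n - 1) < x s n"
      using beta_neg_if_hit[OF s] beta_D_spin[OF n, of "n - 1" s b] spin3 by auto
  qed
  show "y (s + 1) (n - 2) \<le> y s (n - 1) + y s n"
  proof (cases "(s + 1, n - 2) = (m, j)")
    case True
    have "x (s + 1) (n - 3) \<le> x s (n - 2)"
      using diag_monoD[OF diag s, of "n - 2"] n by (simp add: numeral_3_eq_3)
    then have "x (s + 1) (n - 2) < x s (n - 1) + x s n"
      using beta_neg_if_hit[OF s True] beta_D_branch[OF n, of s b] True by simp
    then show ?thesis
      using xc_ftil[of "s + 1" "n - 2"] x_le_y[of s "n - 1"] x_le_y[of s n] True by simp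
  next
    case False
    then show ?thesis
      using xc_ftil[of "s + 1" "n - 2"] x_le_y[of s "n - 1"] x_le_y[of s n] spin3 by auto
  qed
qed

lemma spin_mono_ftil_same_row:
  assumes step: "ftil_step TD n j m b" and n: "4 \<le> n" and s: "2 \<le> s" and spin: "spin_mono n b"
  shows "xc TD n (ftil TD n j b) s (n - 1) + xc TD n (ftil TD n j b) s n \<le> xc TD n (ftil TD n j b) s (n - 2)"
proof -
  interpret ftil_step TD n j m b by (rule step)
  have s': "1 \<le> s - 1" "s - 1 + 1 = s"
    using s by auto
  have spin1: "x s n \<le> x (s - 1) (n - 1)" and spin2: "x s (n - 1) \<le> x (s - 1) n"
    and spin4: "x s (n - 1) + x s n \<le> x s (n - 2)"
    using spin s s' unfolding spin_mono_def by (metis (no_types, lifting))+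
  consider "(s, n - 1) = (m, j)" | "(s, n) = (m, j)" | "(s, n - 1) \<noteq> (m, j)" "(s, n) \<noteq> (m, j)"
    by blast
  then show ?thesis
  proof cases
    case 1
    then have "x s (n - 1) + x s n < x s (n - 2)"
      using beta_neg_if_hit[OF s'(1), of "n - 1"] beta_D_spin[OF n, of "n - 1" "s - 1" b] spin1 s' by auto
    then show ?thesis
      using xc_ftil[of s "n - 1"] xc_ftil[of s n] x_le_y[of s "n - 2"] 1 n by auto
  next
    case 2
    then have "x s (n - 1) + x s n < x s (n - 2)"
      using beta_neg_if_hit[OF s'(1), of n] beta_D_spin[OF n, of n "s - 1" b] spin2 s' by auto
    then show ?thesis
      using xc_ftil[of s "n - 1"] xc_ftil[of s n] x_le_y[of s "n - 2"] 2 n by auto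
  next
    case 3
    then have "y s (n - 1) = x s (n - 1)" "y s n = x s n"
      by (simp_all add: xc_ftil)
    then show ?thesis
      using x_le_y[of s "n - 2"] spin4 by simp
  qed
qed

lemma spin_mono_ftil:
  assumes "ftil_step TD n j m b" "4 \<le> n" "diag_mono TD n (n - 2) b" "spin_mono n b"
  shows "spin_mono n (ftil TD n j b)"
  using spin_mono_ftil_adjacent_rows[OF assms(1,2) _ assms(3,4)] spin_mono_ftil_same_row[OF assms(1,2) _ assms(4)]
  unfolding spin_mono_def by blast

lemma in_cone_A_ftil:
  assumes step: "ftil_step TA n j m b" and cone: "in_cone TA n b"
  shows "in_cone TA n (ftil TA n j b)"
proof -
  interpret ftil_step TA n j m b by (rule step)
  from cone have "nonneg TA n b" "diag_mono TA n n b"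
    by (simp_all add: in_cone_def)
  then show ?thesis
    using nonneg_ftil diag_mono_ftil[OF chain_node_A] by (simp add: in_cone_def)
qed

lemma in_cone_B_ftil:
  assumes step: "ftil_step TB n j m b" and n: "2 \<le> n" and cone: "in_cone TB n b"
  shows "in_cone TB n (ftil TB n j b)"
proof -
  interpret ftil_step TB n j m b by (rule step)
  from cone have nonneg: "nonneg TB n b" and diag: "diag_mono TB n n b"
    and row: "row_mono TB n (n + 1) n b"
    by (simp_all add: in_cone_def)
  have last: "x s n < x s (n - 1)" if "2 \<le> s" "beta TB n (s - 1) n b < 0" for s
  proof -
    have "x s (n - 1) \<le> x (s - 1) n"
      using diag_monoD[OF diag, of "s - 1" n] that n by simp
    then show ?thesis
      using that beta_B_last[OF n, of "s - 1" b] by simp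
  qed
  show ?thesis
    using nonneg_ftil[OF nonneg] diag_mono_ftil[OF chain_node_B nonneg diag]
      row_mono_ftil[OF chain_node_B _ _ row] last
    by (simp add: in_cone_def)
qed

lemma in_cone_D_ftil:
  assumes step: "ftil_step TD n j m b" and n: "4 \<le> n" and cone: "in_cone TD n b"
  shows "in_cone TD n (ftil TD n j b)"
proof -
  interpret ftil_step TD n j m b by (rule step)
  from cone have nonneg: "nonneg TD n b" and diag: "diag_mono TD n (n - 2) b"
    and row: "row_mono TD n n (n - 2) b" and spin: "spin_mono n b"
    by (simp_all add: in_cone_def)
  have last: "x s (n - 2) < x s (n - 2 - 1)" if "2 \<le> s" "n \<le> s + (n - 2) - 1"
    "beta TD n (s - 1) (n - 2) b < 0" for s
  proof -
    have "2 \<le> s - 1"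
      using that n by simp
    then have "x (s - 1) (n - 1) + x (s - 1) n \<le> x (s - 1) (n - 2)"
      using spin unfolding spin_mono_def by blast
    then show ?thesis
      using that beta_D_branch[OF n, of "s - 1" b] n by (simp add: numeral_3_eq_3)
  qed
  have chain: "chain_node TD n u" if "u < n - 2" for u
    using that by (intro chain_node_D) simp
  show ?thesis
    using nonneg_ftil[OF nonneg] diag_mono_ftil[OF chain nonneg diag]
      row_mono_ftil[OF chain _ last row] spin_mono_ftil[OF step n diag spin] n
    by (simp add: in_cone_def)
qed

lemma in_cone_ftil:
  assumes valid: "valid_type X n" and j: "j \<in> {1..n}" and cone: "in_cone X n b"
  shows "in_cone X n (ftil X n j b)"
proof -
  obtain m where step: "ftil_step X n j m b"
    using ftil_stepI[OF valid j] .
  show ?thesis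
    using in_cone_A_ftil in_cone_B_ftil in_cone_D_ftil step cone valid
    by (cases X) (auto simp: valid_type_def)
qed

lemma Binf_in_cone:
  assumes "valid_type X n"
  shows "b \<in> Binf X n \<Longrightarrow> in_cone X n b"
proof (induction rule: Binf.induct)
  case zero
  then show ?case
    by (simp add: in_cone_def nonneg_def diag_mono_def row_mono_def spin_mono_def split: ltype.split)
next
  case (step b j)
  then show ?case
    using in_cone_ftil[OF assms] by blast
qed

lemma beta_last_row_le_eps:
  assumes "valid_type X n" "i \<in> {1..n}"
  shows "beta X n (Tlen X n i) i b \<le> eps X n i b"
proof -
  have "row (Tlen X n i) \<in> Pi X n i"
    using Tlen_pos[OF assms] unfolding Pi_eq_rows by (intro imageI) simp
  then show ?thesis
    using Gamma_le_eps[of "row (Tlen X n i)" X n i b] by (simp add: Gamma_def)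
qed

lemma beta_last_row_nonneg_A:
  assumes i: "i \<in> {1..n}" and cone: "in_cone TA n b"
  shows "0 \<le> beta TA n (Tlen TA n i) i b"
proof -
  let ?x = "xc TA n b"
  define L where "L = n + 1 - i"
  have L: "Tlen TA n i = L" "1 \<le> L"
    using i by (auto simp: Tlen_def L_def)
  have out: "?x L (i + 1) = 0" "?x (L + 1) i = 0"
    by (auto simp: L_def Iset_def intro!: xc_notin_Iset)
  have "?x (L + 1) (i - 1) \<le> ?x L i"
  proof (cases "i = 1")
    case True
    then show ?thesis
      using cone by (simp add: in_cone_def nonneg_def)
  next
    case False
    then show ?thesis
      using cone diag_monoD[of TA n n b L i] L i by (simp add: in_cone_def)
  qed
  then show ?thesis
    using i beta_chain_node[OF chain_node_A, of i n L b] out L by simp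
qed

lemma beta_last_row_nonneg_B:
  assumes n: "2 \<le> n" and i: "i \<in> {1..n}" and cone: "in_cone TB n b"
  shows "0 \<le> beta TB n (Tlen TB n i) i b"
proof -
  let ?x = "xc TB n b"
  have out: "?x (n + 1) t = 0" for t
    by (auto simp: Iset_def intro!: xc_notin_Iset)
  show ?thesis
  proof (cases "i < n")
    case True
    have "?x n (i + 1) \<le> ?x n i"
      using cone i True row_monoD[of TB n "n + 1" n b n i] by (simp add: in_cone_def)
    then show ?thesis
      using True beta_chain_node[OF chain_node_B[OF True], of n b] out by (simp add: Tlen_def)
  next
    case False
    then have "i = n"
      using i by simp
    then show ?thesis
      using beta_B_last[OF n, of n b] out cone by (simp add: Tlen_def in_cone_def nonneg_def)
  qed
qed

lemma beta_last_row_nonneg_D: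
  assumes n: "4 \<le> n" and i: "i \<in> {1..n}" and cone: "in_cone TD n b"
  shows "0 \<le> beta TD n (Tlen TD n i) i b"
proof -
  let ?x = "xc TD n b"
  have out: "?x n t = 0" for t
    by (auto simp: Iset_def intro!: xc_notin_Iset)
  have L: "Tlen TD n i = n - 1" "n - 1 + 1 = n"
    using n by (auto simp: Tlen_def)
  consider "i + 3 \<le> n" | "i = n - 2" | "i = n - 1 \<or> i = n"
    using i by fastforce
  then show ?thesis
  proof cases
    case 1
    have "?x (n - 1) (i + 1) \<le> ?x (n - 1) i"
      using cone i 1 row_monoD[of TD n n "n - 2" b "n - 1" i] by (simp add: in_cone_def)
    then show ?thesis
      using beta_chain_node[OF chain_node_D[OF 1], of "n - 1" b] out L by simp
  next
    case 2
    have "?x (n - 1) (n - 1) + ?x (n - 1) n \<le> ?x (n - 1) (n - 2)"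
      using cone n unfolding in_cone_def spin_mono_def by auto
    then show ?thesis
      using 2 beta_D_branch[OF n, of "n - 1" b] out L by simp
  next
    case 3
    then show ?thesis
      using beta_D_spin[OF n 3, of "n - 1" b] out L cone by (simp add: in_cone_def nonneg_def)
  qed
qed

lemma beta_last_row_nonneg:
  assumes "valid_type X n" "i \<in> {1..n}" "in_cone X n b"
  shows "0 \<le> beta X n (Tlen X n i) i b"
  using assms beta_last_row_nonneg_A beta_last_row_nonneg_B beta_last_row_nonneg_D
  by (cases X) (auto simp: valid_type_def)

lemma eps_nonneg:
  assumes "valid_type X n" "i \<in> {1..n}" "b \<in> Binf X n"
  shows "0 \<le> eps X n i b"
  using beta_last_row_nonneg[OF assms(1,2) Binf_in_cone[OF assms(1,3)]]
    beta_last_row_le_eps[OF assms(1,2), of b]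
  by linarith

section \<open>Strict partitions\<close>

lemma finite_TSshape: "finite (TSshape X n i)"
proof -
  have "TSshape X n i \<subseteq> {0..n + 1} \<times> {0..max i (n + 1)}"
    by (auto simp: TSshape_def split: ltype.splits)
  then show ?thesis
    by (rule finite_subset) simp
qed

lemma finite_PiS: "finite (PiS X n i)"
proof -
  have "PiS X n i \<subseteq> Pow (TSshape X n i)"
    by (auto simp: PiS_def)
  then show ?thesis
    using finite_TSshape by (rule finite_subset[OF _ finite_Pow_iff[THEN iffD2]])
qed

lemma GammaS_le_epsS: "\<mu> \<in> PiS X n i \<Longrightarrow> GammaS X n i \<mu> b \<le> epsS X n i b"
  unfolding epsS_def using finite_PiS by (intro Max_ge) auto

lemma young_row_cells:
  assumes young: "young \<mu>" and fin: "finite \<mu>"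
  shows "{t. (s, t) \<in> \<mu>} = {1..rowlen \<mu> s}"
proof -
  let ?A = "{t. (s, t) \<in> \<mu>}"
  have "finite ?A"
    using finite_subset[of ?A "snd ` \<mu>"] fin by force
  have "?A = {1..card ?A}"
  proof (cases "?A = {}")
    case False
    define r where "r = Max ?A"
    have "r \<in> ?A"
      unfolding r_def using \<open>finite ?A\<close> False by (rule Max_in)
    have "?A = {1..r}"
    proof (intro equalityI subsetI)
      fix t assume t: "t \<in> ?A"
      then show "t \<in> {1..r}"
        using Max_ge[OF \<open>finite ?A\<close> t] young_pos[OF young] unfolding r_def by auto
    next
      fix t assume t: "t \<in> {1..r}"
      have "(s, r) \<in> \<mu>"
        using \<open>r \<in> ?A\<close> by simp
      moreover from this have "1 \<le> s"
        using young_pos[OF young] by blast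
      ultimately show "t \<in> ?A"
        using young_down[OF young, of s r s t] t by simp
    qed
    then show ?thesis
      by simp
  qed simp
  then show ?thesis
    by (simp add: rowlen_def)
qed

lemma rowlen_Un_Int:
  assumes "young a" "young c" "finite a" "finite c"
  shows "rowlen (a \<union> c) s = max (rowlen a s) (rowlen c s)"
    and "rowlen (a \<inter> c) s = min (rowlen a s) (rowlen c s)"
proof -
  have "{t. (s, t) \<in> a \<union> c} = {t. (s, t) \<in> a} \<union> {t. (s, t) \<in> c}"
    "{t. (s, t) \<in> a \<inter> c} = {t. (s, t) \<in> a} \<inter> {t. (s, t) \<in> c}"
    by auto
  then have "{t. (s, t) \<in> a \<union> c} = {1..max (rowlen a s) (rowlen c s)}"
    "{t. (s, t) \<in> a \<inter> c} = {1..min (rowlen a s) (rowlen c s)}"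
    unfolding young_row_cells[OF assms(1,3)] young_row_cells[OF assms(2,4)]
    by (auto simp: max_def min_def)
  then show "rowlen (a \<union> c) s = max (rowlen a s) (rowlen c s)"
    "rowlen (a \<inter> c) s = min (rowlen a s) (rowlen c s)"
    by (simp_all add: rowlen_def)
qed

lemma strict_Un_Int:
  assumes "young a" "young c" "finite a" "finite c" "strict a" "strict c"
  shows "strict (a \<union> c)" "strict (a \<inter> c)"
proof -
  have "0 < f (rowlen a (Suc s)) (rowlen c (Suc s)) \<Longrightarrow>
      f (rowlen a (Suc s)) (rowlen c (Suc s)) < f (rowlen a s) (rowlen c s)"
    if "1 \<le> s" "f = max \<or> f = min" for f s
  proof -
    have "0 < rowlen a (Suc s) \<Longrightarrow> rowlen a (Suc s) < rowlen a s"
      "0 < rowlen c (Suc s) \<Longrightarrow> rowlen c (Suc s) < rowlen c s"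
      using assms(5,6) that(1) by (simp_all add: strict_def)
    with that(2) show "0 < f (rowlen a (Suc s)) (rowlen c (Suc s)) \<Longrightarrow>
      f (rowlen a (Suc s)) (rowlen c (Suc s)) < f (rowlen a s) (rowlen c s)"
      by (auto simp: max_def min_def)
  qed
  then show "strict (a \<union> c)" "strict (a \<inter> c)"
    unfolding strict_def rowlen_Un_Int[OF assms(1-4)] by blast+
qed

lemma young_11:
  assumes "young \<mu>" "\<mu> \<noteq> {}"
  shows "(1, 1) \<in> \<mu>"
proof -
  obtain s t where st: "(s, t) \<in> \<mu>"
    using assms(2) by auto
  then show ?thesis
    using young_pos[OF assms(1) st] young_down[OF assms(1) st, of 1 1] by simp
qed

lemma PiS_Un_Int:
  assumes "a \<in> PiS X n i" "c \<in> PiS X n i"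
  shows "a \<union> c \<in> PiS X n i" "a \<inter> c \<in> PiS X n i"
proof -
  have young: "young a" "young c" and strict: "strict a" "strict c"
    and sub: "a \<subseteq> TSshape X n i" "c \<subseteq> TSshape X n i" and ne: "a \<noteq> {}" "c \<noteq> {}"
    using assms by (auto simp: PiS_def)
  have fin: "finite a" "finite c"
    using sub finite_TSshape by (auto intro: finite_subset)
  have "young (a \<union> c)" "young (a \<inter> c)"
    using young unfolding young_def by blast+
  moreover have "(1, 1) \<in> a \<inter> c"
    using young_11 young ne by blast
  ultimately show "a \<union> c \<in> PiS X n i" "a \<inter> c \<in> PiS X n i"
    using strict_Un_Int[OF young fin strict] sub by (auto simp: PiS_def)
qed

lemma singleton_in_PiS:
  assumes "valid_type X n" "i \<in> {1..n}"
  shows "{(1, 1)} \<in> PiS X n i"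
  using assms
  by (auto simp: PiS_def young_def strict_def rowlen_def TSshape_def valid_type_def stair_def
      split: ltype.splits)

lemma PiS_nonempty: "valid_type X n \<Longrightarrow> i \<in> {1..n} \<Longrightarrow> PiS X n i \<noteq> {}"
  using singleton_in_PiS by blast

definition GammaS_argmax :: "ltype \<Rightarrow> nat \<Rightarrow> nat \<Rightarrow> vec \<Rightarrow> (nat \<times> nat) set set" where
  "GammaS_argmax X n i b = {\<mu> \<in> PiS X n i. GammaS X n i \<mu> b = epsS X n i b}"

lemma GammaS_argmax_lattice:
  assumes "valid_type X n" "i \<in> {1..n}"
  shows "finite (GammaS_argmax X n i b)" "GammaS_argmax X n i b \<noteq> {}"
    and "\<And>a c. a \<in> GammaS_argmax X n i b \<Longrightarrow> c \<in> GammaS_argmax X n i b \<Longrightarrow> a \<inter> c \<in> GammaS_argmax X n i b"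
    and "\<And>a c. a \<in> GammaS_argmax X n i b \<Longrightarrow> c \<in> GammaS_argmax X n i b \<Longrightarrow> a \<union> c \<in> GammaS_argmax X n i b"
proof -
  show "finite (GammaS_argmax X n i b)"
    using finite_PiS by (simp add: GammaS_argmax_def)
  have "epsS X n i b \<in> (\<lambda>\<mu>. GammaS X n i \<mu> b) ` PiS X n i"
    unfolding epsS_def using finite_PiS PiS_nonempty[OF assms] by (intro Max_in) auto
  then show "GammaS_argmax X n i b \<noteq> {}"
    by (auto simp: GammaS_argmax_def)
  fix a c assume "a \<in> GammaS_argmax X n i b" "c \<in> GammaS_argmax X n i b"
  then have a: "a \<in> PiS X n i" "GammaS X n i a b = epsS X n i b"
    and c: "c \<in> PiS X n i" "GammaS X n i c b = epsS X n i b"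
    by (auto simp: GammaS_argmax_def)
  note lat = PiS_Un_Int[OF a(1) c(1)]
  \<comment> \<open>modularity, together with the bound \<open>epsS\<close>, makes \<open>a \<union> c\<close> and \<open>a \<inter> c\<close> maximizers\<close>
  have "GammaS X n i (a \<union> c) b + GammaS X n i (a \<inter> c) b = GammaS X n i a b + GammaS X n i c b"
    using finite_subset[OF _ finite_TSshape] a(1) c(1) unfolding GammaS_def PiS_def
    by (intro sum.union_inter) auto
  then show "a \<inter> c \<in> GammaS_argmax X n i b" "a \<union> c \<in> GammaS_argmax X n i b"
    using GammaS_le_epsS[OF lat(1), of b] GammaS_le_epsS[OF lat(2), of b] lat a c
    by (auto simp: GammaS_argmax_def)
qed

lemma mmS_least:
  assumes "valid_type X n" "i \<in> {1..n}"
  shows "mmS X n i b \<in> GammaS_argmax X n i b" "\<And>\<mu>. \<mu> \<in> GammaS_argmax X n i b \<Longrightarrow> mmS X n i b \<subseteq> \<mu>"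
  unfolding mmS_def GammaS_argmax_def[symmetric]
  using minimal_in_least[OF GammaS_argmax_lattice(1-3)[OF assms]] by blast+

lemma MMS_greatest:
  assumes "valid_type X n" "i \<in> {1..n}"
  shows "MMS X n i b \<in> GammaS_argmax X n i b" "\<And>\<mu>. \<mu> \<in> GammaS_argmax X n i b \<Longrightarrow> \<mu> \<subseteq> MMS X n i b"
  unfolding MMS_def GammaS_argmax_def[symmetric]
  using maximal_in_greatest[OF GammaS_argmax_lattice(1,2,4)[OF assms]] by blast+

definition stairset :: "nat \<Rightarrow> (nat \<times> nat) set" where
  "stairset N = {(s, t). 1 \<le> s \<and> 1 \<le> t \<and> s + t \<le> N}"

lemma TSshape_B: "TSshape TB n n = stairset (n + 1)"
  by (simp add: TSshape_def stair_def stairset_def)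

lemma TSshape_D: "i = n - 1 \<or> i = n \<Longrightarrow> TSshape TD n i = stairset n"
  by (auto simp: TSshape_def stair_def stairset_def)

lemma stairset_young_strict:
  assumes "2 \<le> N"
  shows "young (stairset N)" "strict (stairset N)" "stairset N \<noteq> {}"
proof -
  show "young (stairset N)"
    unfolding young_def stairset_def by auto
  have "rowlen (stairset N) s = N - s" if "1 \<le> s" for s
  proof -
    have "{t. (s, t) \<in> stairset N} = {1..N - s}"
      using that by (auto simp: stairset_def)
    then show ?thesis
      by (simp add: rowlen_def)
  qed
  then show "strict (stairset N)"
    unfolding strict_def by auto
  have "(1, 1) \<in> stairset N"
    using assms by (simp add: stairset_def)
  then show "stairset N \<noteq> {}"
    by blast
qed

lemma TSshape_in_PiS:
  assumes valid: "valid_type X n" and i: "i \<in> {1..n}"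
  shows "TSshape X n i \<in> PiS X n i"
proof (cases "stair X n i")
  case False
  then have shape: "TSshape X n i = row i"
    by (simp add: TSshape_def row_def)
  have "rowlen (row i) (Suc s) = 0" if "1 \<le> s" for s
    using that by (simp add: rowlen_def row_def)
  then have "strict (row i)"
    by (simp add: strict_def)
  moreover have "row i \<noteq> {}"
    using i by (auto simp: row_def)
  ultimately show ?thesis
    using young_row by (simp add: PiS_def shape)
next
  case True
  have "\<exists>N. TSshape X n i = stairset N \<and> 2 \<le> N"
  proof (cases X)
    case TB
    then show ?thesis
      using True valid by (auto simp: stair_def valid_type_def TSshape_B)
  next
    case TD
    then have "i = n - 1 \<or> i = n" "4 \<le> n"
      using True valid i by (auto simp: stair_def valid_type_def)
    then show ?thesis
      using TD TSshape_D by auto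
  qed (use True in \<open>simp add: stair_def\<close>)
  then obtain N where "TSshape X n i = stairset N" "2 \<le> N"
    by blast
  then show ?thesis
    using stairset_young_strict[of N] by (simp add: PiS_def)
qed

section \<open>\<open>GammaS\<close> on the full shape of \<open>T_i\<^sup>*\<close>\<close>

lemma sum_antidiagonal_telescope:
  fixes x :: "nat \<Rightarrow> nat \<Rightarrow> int"
  assumes "T \<le> c"
  shows "(\<Sum>t<T. x (a + t) (c - t) - x (a + t) (c - t + 1) - x (a + t + 1) (c - t - 1) + x (a + t + 1) (c - t))
    = x a c - x (a + T) (c - T) + x (a + T) (c - T + 1) - x a (c + 1)"
  using assms
proof (induction T)
  case (Suc T)
  then have "c - T = c - Suc T + 1" "c - T - 1 = c - Suc T"
    by simp_all
  with Suc show ?case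
    by simp
qed simp

lemma sum_beta_antidiagonal:
  assumes "T \<le> c"
    and chain: "\<And>t. t < T \<Longrightarrow> beta X n (a + t) (c - t) b = xc X n b (a + t) (c - t) - xc X n b (a + t) (c - t + 1)
      - xc X n b (a + t + 1) (c - t - 1) + xc X n b (a + t + 1) (c - t)"
  shows "(\<Sum>t<T. beta X n (a + t) (c - t) b)
    = xc X n b a c - xc X n b (a + T) (c - T) + xc X n b (a + T) (c - T + 1) - xc X n b a (c + 1)"
  using sum_antidiagonal_telescope[OF assms(1), of "xc X n b" a] chain by simp

lemma sum_atLeast1_split:
  fixes M :: nat
  assumes "1 \<le> M"
  shows "(\<Sum>t\<in>{1..M}. f t) = f 1 + (\<Sum>t<M - 1. f (t + 2))"
proof -
  have "{1..M} = insert 1 ((\<lambda>t. t + 2) ` {..<M - 1})"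
  proof (intro equalityI subsetI)
    fix k assume "k \<in> {1..M}"
    then show "k \<in> insert 1 ((\<lambda>t. t + 2) ` {..<M - 1})"
      by (cases "k = 1") (auto intro!: image_eqI[of _ _ "k - 2"])
  qed (use assms in auto)
  moreover have "1 \<notin> (\<lambda>t. t + 2) ` {..<M - 1}"
    by auto
  ultimately show ?thesis
    by (simp add: sum.reindex inj_on_def)
qed

definition Tstar_entry :: "ltype \<Rightarrow> nat \<Rightarrow> nat \<Rightarrow> nat \<times> nat \<Rightarrow> vec \<Rightarrow> int" where
  "Tstar_entry X n i c b = TScoef X n i c * betaS X n (fst (TSidx X n i c)) (snd (TSidx X n i c)) b"

lemma GammaS_eq_sum_entries: "GammaS X n i \<mu> b = (\<Sum>c\<in>\<mu>. Tstar_entry X n i c b)"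
  by (simp add: GammaS_def Tstar_entry_def)

lemma beta_nonstair_chain:
  assumes valid: "valid_type X n" and i: "i \<in> {1..n}" and nonstair: "\<not> stair X n i" and "t < i"
  shows "beta X n t (i - t) b = xc X n b t (i - t) - xc X n b t (i - t + 1)
      - xc X n b (t + 1) (i - t - 1) + xc X n b (t + 1) (i - t)"
proof (cases X)
  case TA
  have "i - t \<le> n"
    using i by (auto intro: le_trans[OF diff_le_self])
  then show ?thesis
    using beta_chain_node[OF chain_node_A, of "i - t" n t b] TA by simp
next
  case TB
  then have "i - t < n"
    using i nonstair by (auto simp: stair_def)
  then show ?thesis
    using beta_chain_node[OF chain_node_B, of "i - t" n t b] TB by simp
next
  case TD
  have n: "4 \<le> n" "i \<le> n - 2"
    using valid i nonstair TD by (auto simp: valid_type_def stair_def)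
  show ?thesis
  proof (cases "i - t + 3 \<le> n")
    case True
    then show ?thesis
      using beta_chain_node[OF chain_node_D[OF True], of t b] TD by simp
  next
    case False
    \<comment> \<open>the branch node \<open>n - 2\<close> occurs only in row \<open>0\<close>, where its extra term vanishes\<close>
    then have "t = 0" "i = n - 2"
      using n \<open>t < i\<close> by auto
    then show ?thesis
      using beta_D_branch[OF n(1), of 0 b] TD n by (simp add: numeral_3_eq_3)
  qed
qed

lemma GammaS_nonstair_shape:
  assumes valid: "valid_type X n" and i: "i \<in> {1..n}" and nonstair: "\<not> stair X n i"
  shows "GammaS X n i (TSshape X n i) b = xc X n b i 1"
proof -
  have shape: "TSshape X n i = (\<lambda>t. (1, t + 1)) ` {..<i}"
  proof (intro equalityI subsetI)
    fix c assume "c \<in> TSshape X n i"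
    then obtain t where "c = (1, t)" "1 \<le> t" "t \<le> i"
      using nonstair by (auto simp: TSshape_def)
    then show "c \<in> (\<lambda>t. (1, t + 1)) ` {..<i}"
      by (intro image_eqI[of _ _ "t - 1"]) auto
  qed (use nonstair in \<open>auto simp: TSshape_def\<close>)
  have "GammaS X n i (TSshape X n i) b = (\<Sum>t<i. beta X n t (i - t) b)"
    using nonstair
    by (simp add: GammaS_eq_sum_entries shape sum.reindex inj_on_def Tstar_entry_def TScoef_def TSidx_def betaS_eq_beta)
  also have "\<dots> = xc X n b i 1"
    using sum_beta_antidiagonal[where T = i and c = i and a = 0] beta_nonstair_chain[OF valid i nonstair]
    by simp
  finally show ?thesis .
qed

lemma sum_stairset: "(\<Sum>c\<in>stairset N. f c) = (\<Sum>s\<in>{1..N - 1}. \<Sum>t\<in>{1..N - s}. f (s, t))"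
proof -
  have "stairset N = Sigma {1..N - 1} (\<lambda>s. {1..N - s})"
    by (auto simp: stairset_def)
  then show ?thesis
    by (simp add: sum.Sigma)
qed

lemma sum_telescope_from_1:
  fixes f :: "nat \<Rightarrow> int"
  shows "(\<Sum>s\<in>{1..N}. f s - f (s - 1)) = f N - f 0"
  using sum_telescope''[of 0 N f] by simp

lemma Tstar_entry_B:
  assumes "1 \<le> s"
  shows "Tstar_entry TB n n (s, 1) b = beta TB n (s - 1) n b"
    and "Tstar_entry TB n n (s, t + 2) b = 2 * beta TB n (s + t) (n - 1 - t) b"
  using assms by (simp_all add: Tstar_entry_def TScoef_def TSidx_def stair_def betaS_eq_beta)

lemma Tstar_B_row_sum:
  assumes n: "2 \<le> n" and s: "1 \<le> s" "s \<le> n"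
  shows "(\<Sum>t\<in>{1..n + 1 - s}. Tstar_entry TB n n (s, t) b)
    = xc TB n b (s - 1) n - xc TB n b s n + 2 * (xc TB n b n s - xc TB n b n (s - 1))"
proof -
  have "(\<Sum>t<n - s. beta TB n (s + t) (n - 1 - t) b)
      = xc TB n b s (n - 1) - xc TB n b (s + (n - s)) (n - 1 - (n - s))
        + xc TB n b (s + (n - s)) (n - 1 - (n - s) + 1) - xc TB n b s (n - 1 + 1)"
    using s by (intro sum_beta_antidiagonal) (auto simp: beta_chain_node[OF chain_node_B])
  also have "\<dots> = xc TB n b s (n - 1) - xc TB n b n (s - 1) + xc TB n b n s - xc TB n b s n"
    using s by (simp add: Suc_diff_le)
  finally have diag: "(\<Sum>t<n - s. beta TB n (s + t) (n - 1 - t) b)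
      = xc TB n b s (n - 1) - xc TB n b n (s - 1) + xc TB n b n s - xc TB n b s n" .
  have "(\<Sum>t\<in>{1..n + 1 - s}. Tstar_entry TB n n (s, t) b)
      = Tstar_entry TB n n (s, 1) b + (\<Sum>t<n + 1 - s - 1. Tstar_entry TB n n (s, t + 2) b)"
    using s by (intro sum_atLeast1_split) simp
  also have "\<dots> = beta TB n (s - 1) n b + 2 * (\<Sum>t<n - s. beta TB n (s + t) (n - 1 - t) b)"
    using s unfolding Tstar_entry_B[OF s(1)] by (simp add: sum_distrib_left)
  finally show ?thesis
    using diag beta_B_last[OF n, of "s - 1" b] s by simp
qed

lemma GammaS_B_staircase:
  assumes n: "2 \<le> n"
  shows "GammaS TB n n (TSshape TB n n) b = xc TB n b n n"
proof -
  let ?x = "xc TB n b"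
  have "GammaS TB n n (TSshape TB n n) b = (\<Sum>s\<in>{1..n}. \<Sum>t\<in>{1..n + 1 - s}. Tstar_entry TB n n (s, t) b)"
    by (simp add: GammaS_eq_sum_entries TSshape_B sum_stairset)
  also have "\<dots> = (\<Sum>s\<in>{1..n}. ?x (s - 1) n - ?x s n + 2 * (?x n s - ?x n (s - 1)))"
    using Tstar_B_row_sum[OF n] by (intro sum.cong refl) simp
  also have "\<dots> = - (\<Sum>s\<in>{1..n}. ?x s n - ?x (s - 1) n) + 2 * (\<Sum>s\<in>{1..n}. ?x n s - ?x n (s - 1))"
    by (simp add: sum.distrib sum_distrib_left sum_subtractf)
  also have "\<dots> = ?x n n"
    using sum_telescope_from_1[of "\<lambda>s. ?x s n" n] sum_telescope_from_1[of "\<lambda>s. ?x n s" n] by simp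
  finally show ?thesis .
qed

text \<open>The column of the index in cell \<open>(s, 1)\<close> of the type \<open>D\<close> staircase \<open>T_i\<^sup>*\<close>.\<close>

definition spin_col :: "nat \<Rightarrow> nat \<Rightarrow> nat \<Rightarrow> nat" where
  "spin_col n i s = (if odd s \<longleftrightarrow> i = n - 1 then n - 1 else n)"

lemma spin_col_cases: "spin_col n i s = n - 1 \<or> spin_col n i s = n"
  by (simp add: spin_col_def)

lemma spin_col_pair:
  fixes f :: "nat \<Rightarrow> int"
  shows "f (spin_col n i s) + f (spin_col n i (s + 1)) = f (n - 1) + f n"
  by (auto simp: spin_col_def)

lemma Tstar_entry_D:
  assumes "i = n - 1 \<or> i = n" "1 \<le> s"
  shows "Tstar_entry TD n i (s, 1) b = beta TD n (s - 1) (spin_col n i s) b"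
    and "Tstar_entry TD n i (s, t + 2) b = beta TD n (s + t) (n - 2 - t) b"
  using assms
  by (auto simp: Tstar_entry_def TScoef_def TSidx_def stair_def spin_col_def betaS_eq_beta)

lemma Tstar_D_row_sum:
  assumes n: "4 \<le> n" and i: "i = n - 1 \<or> i = n" and s: "1 \<le> s" "s \<le> n - 2"
  shows "(\<Sum>t\<in>{1..n - s}. Tstar_entry TD n i (s, t) b)
    = xc TD n b (s - 1) (spin_col n i s) - xc TD n b s (spin_col n i (s + 1))
      + xc TD n b (n - 1) s - xc TD n b (n - 1) (s - 1)"
proof -
  let ?x = "xc TD n b"
  have "(\<Sum>t<n - 2 - s. beta TD n (s + 1 + t) (n - 3 - t) b)
      = ?x (s + 1) (n - 3) - ?x (s + 1 + (n - 2 - s)) (n - 3 - (n - 2 - s))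
        + ?x (s + 1 + (n - 2 - s)) (n - 3 - (n - 2 - s) + 1) - ?x (s + 1) (n - 3 + 1)"
    using s by (intro sum_beta_antidiagonal) (auto simp: beta_chain_node[OF chain_node_D])
  also have "\<dots> = ?x (s + 1) (n - 3) - ?x (n - 1) (s - 1) + ?x (n - 1) s - ?x (s + 1) (n - 2)"
    using s n by (simp add: numeral_3_eq_3 numeral_2_eq_2 Suc_diff_Suc)
  finally have tail: "(\<Sum>t<n - 2 - s. beta TD n (s + 1 + t) (n - 3 - t) b)
      = ?x (s + 1) (n - 3) - ?x (n - 1) (s - 1) + ?x (n - 1) s - ?x (s + 1) (n - 2)" .
  have "(\<Sum>t\<in>{1..n - s}. Tstar_entry TD n i (s, t) b)
      = Tstar_entry TD n i (s, 1) b + (\<Sum>t<Suc (n - 2 - s). Tstar_entry TD n i (s, t + 2) b)"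
    using s sum_atLeast1_split[of "n - s" "\<lambda>t. Tstar_entry TD n i (s, t) b"]
    by (simp add: Suc_diff_Suc numeral_2_eq_2)
  also have "\<dots> = beta TD n (s - 1) (spin_col n i s) b + beta TD n s (n - 2) b
      + (\<Sum>t<n - 2 - s. beta TD n (s + 1 + t) (n - 3 - t) b)"
    unfolding sum.lessThan_Suc_shift Tstar_entry_D[OF i s(1)]
    by (simp add: numeral_3_eq_3 numeral_2_eq_2)
  finally show ?thesis
    using tail beta_D_spin[OF n spin_col_cases[of n i s], of "s - 1" b] beta_D_branch[OF n, of s b]
      spin_col_pair[of "?x s" n i s] s by simp
qed

lemma GammaS_D_staircase:
  assumes n: "4 \<le> n" and i: "i = n - 1 \<or> i = n"
  shows "GammaS TD n i (TSshape TD n i) b = xc TD n b (n - 1) (spin_col n i (n - 1))"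
proof -
  let ?x = "xc TD n b"
  define k where "k s = ?x s (spin_col n i (s + 1))" for s
  define w where "w s = ?x (n - 1) s" for s
  have "GammaS TD n i (TSshape TD n i) b = (\<Sum>s\<in>{1..n - 1}. \<Sum>t\<in>{1..n - s}. Tstar_entry TD n i (s, t) b)"
    by (simp add: GammaS_eq_sum_entries TSshape_D[OF i] sum_stairset)
  also have "\<dots> = (\<Sum>s\<in>{1..n - 2}. \<Sum>t\<in>{1..n - s}. Tstar_entry TD n i (s, t) b)
      + Tstar_entry TD n i (n - 1, 1) b"
  proof -
    have "{1..n - 1} = insert (n - 1) {1..n - 2}"
      using n by auto
    moreover have "n - 1 \<notin> {1..n - 2}" "n - (n - 1) = 1"
      using n by auto
    ultimately show ?thesis
      by (simp add: add.commute)
  qed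
  also have "(\<Sum>s\<in>{1..n - 2}. \<Sum>t\<in>{1..n - s}. Tstar_entry TD n i (s, t) b)
      = (\<Sum>s\<in>{1..n - 2}. (w s - w (s - 1)) - (k s - k (s - 1)))"
    using Tstar_D_row_sum[OF n i] by (intro sum.cong refl) (auto simp: k_def w_def)
  also have "\<dots> = (w (n - 2) - w 0) - (k (n - 2) - k 0)"
    using sum_telescope_from_1[of w "n - 2"] sum_telescope_from_1[of k "n - 2"]
    by (simp add: sum_subtractf)
  also have "Tstar_entry TD n i (n - 1, 1) b = ?x (n - 2) (spin_col n i (n - 1)) - ?x (n - 1) (n - 2)
      + ?x (n - 1) (spin_col n i (n - 1))"
    using Tstar_entry_D(1)[OF i, of "n - 1" b] beta_D_spin[OF n spin_col_cases[of n i "n - 1"], of "n - 2" b] n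
    by (simp add: numeral_2_eq_2 Suc_diff_Suc)
  finally show ?thesis
    using n by (simp add: k_def w_def numeral_2_eq_2 Suc_diff_Suc)
qed

lemma GammaS_TSshape_coordinate:
  assumes valid: "valid_type X n" and i: "i \<in> {1..n}"
  obtains s t where "GammaS X n i (TSshape X n i) b = xc X n b s t"
proof (cases "stair X n i")
  case False
  then show ?thesis
    using GammaS_nonstair_shape[OF valid i] that by blast
next
  case True
  show ?thesis
  proof (cases X)
    case TA
    then show ?thesis using True by (simp add: stair_def)
  next
    case TB
    then have "i = n" "2 \<le> n"
      using True valid by (simp_all add: stair_def valid_type_def)
    then show ?thesis
      using GammaS_B_staircase that TB by blast
  next
    case TD
    then have "i = n - 1 \<or> i = n" "4 \<le> n"
      using True valid i by (auto simp: stair_def valid_type_def)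
    then show ?thesis
      using GammaS_D_staircase that TD by blast
  qed
qed

lemma epsS_nonneg:
  assumes valid: "valid_type X n" and i: "i \<in> {1..n}" and b: "b \<in> Binf X n"
  shows "0 \<le> epsS X n i b"
proof -
  obtain s t where "GammaS X n i (TSshape X n i) b = xc X n b s t"
    using GammaS_TSshape_coordinate[OF valid i] .
  moreover have "0 \<le> xc X n b s t"
    using Binf_in_cone[OF valid b] by (simp add: in_cone_def nonneg_def)
  ultimately show ?thesis
    using GammaS_le_epsS[OF TSshape_in_PiS[OF valid i], of b] by simp
qed

section \<open>The extended crystal\<close>

lemma le_hat_antisym: "le_hat a c \<Longrightarrow> le_hat c a \<Longrightarrow> a = c"
  by (cases a; cases c) auto

lemma the_le_hat_greatest:
  "g \<in> A \<Longrightarrow> (\<And>d. d \<in> A \<Longrightarrow> le_hat d g) \<Longrightarrow> (THE \<gamma>. \<gamma> \<in> A \<and> (\<forall>\<delta>\<in>A. le_hat \<delta> \<gamma>)) = g"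
  by (rule the_equality) (auto intro: le_hat_antisym)

lemma the_le_hat_least:
  "g \<in> A \<Longrightarrow> (\<And>d. d \<in> A \<Longrightarrow> le_hat g d) \<Longrightarrow> (THE \<gamma>. \<gamma> \<in> A \<and> (\<forall>\<delta>\<in>A. le_hat \<gamma> \<delta>)) = g"
  by (rule the_equality) (auto intro: le_hat_antisym)

lemma attHat_eq:
  assumes "valid_type X n" "i \<in> {1..n}"
  shows "attHat X n i k bb =
    (if epsS X n i (bb (k + 1)) \<le> eps X n i (bb k) then Inl ` Gamma_argmax X n i (bb k) else {}) \<union>
    (if eps X n i (bb k) \<le> epsS X n i (bb (k + 1)) then Inr ` GammaS_argmax X n i (bb (k + 1)) else {})"
proof -
  let ?e = "eps X n i (bb k)" and ?e' = "epsS X n i (bb (k + 1))"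
  have "(\<lambda>\<delta>. GammaHat X n i k \<delta> bb) ` PiHat X n i
      = (\<lambda>la. Gamma X n i la (bb k)) ` Pi X n i \<union> (\<lambda>\<mu>. GammaS X n i \<mu> (bb (k + 1))) ` PiS X n i"
    by (auto simp: PiHat_def GammaHat_def image_Un image_image)
  then have max: "Max ((\<lambda>\<delta>. GammaHat X n i k \<delta> bb) ` PiHat X n i) = max ?e ?e'"
    using finite_Pi finite_PiS Pi_nonempty[OF assms] PiS_nonempty[OF assms]
    by (simp add: Max_Un eps_def epsS_def)
  then have att: "attHat X n i k bb = {\<gamma> \<in> PiHat X n i. GammaHat X n i k \<gamma> bb = max ?e ?e'}"
    by (simp only: attHat_def)
  have inl: "Inl la \<in> attHat X n i k bb \<longleftrightarrow> ?e' \<le> ?e \<and> la \<in> Gamma_argmax X n i (bb k)" for la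
    using Gamma_le_eps[of la X n i "bb k"]
    by (auto simp: att PiHat_def GammaHat_def Gamma_argmax_def max_def)
  have inr: "Inr \<mu> \<in> attHat X n i k bb \<longleftrightarrow> ?e \<le> ?e' \<and> \<mu> \<in> GammaS_argmax X n i (bb (k + 1))" for \<mu>
    using GammaS_le_epsS[of \<mu> X n i "bb (k + 1)"]
    by (auto simp: att PiHat_def GammaHat_def GammaS_argmax_def max_def)
  show ?thesis
  proof (rule set_eqI)
    fix \<gamma> :: "(nat \<times> nat) set + (nat \<times> nat) set"
    show "\<gamma> \<in> attHat X n i k bb \<longleftrightarrow> \<gamma> \<in> (if ?e' \<le> ?e then Inl ` Gamma_argmax X n i (bb k) else {}) \<union>
      (if ?e \<le> ?e' then Inr ` GammaS_argmax X n i (bb (k + 1)) else {})"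
      by (cases \<gamma>) (auto simp: inl inr)
  qed
qed

lemma MHat_eq:
  assumes valid: "valid_type X n" and i: "i \<in> {1..n}"
  shows "MHat X n i k bb = (if epsS X n i (bb (k + 1)) < eps X n i (bb k)
    then Inl (MM X n i (bb k)) else Inr (mmS X n i (bb (k + 1))))"
  using MM_greatest[OF valid i, where b = "bb k"] mmS_least[OF valid i, where b = "bb (k + 1)"]
  unfolding MHat_def attHat_eq[OF valid i]
  by (intro the_le_hat_greatest) (auto split: if_splits)

lemma mHat_eq:
  assumes valid: "valid_type X n" and i: "i \<in> {1..n}"
  shows "mHat X n i k bb = (if epsS X n i (bb (k + 1)) \<le> eps X n i (bb k)
    then Inl (mm X n i (bb k)) else Inr (MMS X n i (bb (k + 1))))"
  using mm_least[OF valid i, where b = "bb k"] MMS_greatest[OF valid i, where b = "bb (k + 1)"]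
  unfolding mHat_def attHat_eq[OF valid i]
  by (intro the_le_hat_least) (auto split: if_splits)

lemma kp_wt_poly: "kp_wt (poly X n) (\<lambda>_. 0) bb = wtHat X n bb"
  by (simp add: fun_eq_iff kp_wt_def wtHat_def poly_def)

lemma kp_eps_poly: "kp_eps (poly X n) i k bb = epsHat X n i k bb"
  by (simp add: kp_eps_def epsHat_def GammaHat_def poly_def eps_def epsS_def)

lemma kp_E_poly:
  assumes valid: "valid_type X n" and i: "i \<in> {1..n}" and bb: "bb \<in> Bhat X n"
  shows "kp_E (poly X n) i k bb = Some (EHat X n i k bb)"
proof -
  have "0 \<le> epsS X n i (bb (k + 1))"
    using bb epsS_nonneg[OF valid i] by (simp add: Bhat_def)
  then show ?thesis
    by (auto simp: kp_E_def kp_eps_def EHat_def MHat_eq[OF valid i] poly_def etil_def ftilS_def)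
qed

lemma kp_F_poly:
  assumes valid: "valid_type X n" and i: "i \<in> {1..n}" and bb: "bb \<in> Bhat X n"
  shows "kp_F (poly X n) i k bb = Some (FHat X n i k bb)"
proof -
  have "0 \<le> eps X n i (bb k)"
    using bb eps_nonneg[OF valid i] by (simp add: Bhat_def)
  then show ?thesis
    by (auto simp: kp_F_def kp_eps_def FHat_def mHat_eq[OF valid i] poly_def etilS_def ftil_def)
qed

theorem theorem4p3:
  fixes X :: ltype and n i :: nat and k :: int
  assumes "valid_type X n" and "i \<in> {1..n}"
  shows "kp_set (Binf X n) (\<lambda>_. 0) = Bhat X n \<and>
    (\<forall>bb\<in>Bhat X n.
        kp_wt (poly X n) (\<lambda>_. 0) bb = wtHat X n bb
      \<and> kp_eps (poly X n) i k bb = epsHat X n i k bb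
      \<and> kp_E (poly X n) i k bb = Some (EHat X n i k bb)
      \<and> kp_F (poly X n) i k bb = Some (FHat X n i k bb))"
  using kp_wt_poly kp_eps_poly kp_E_poly[OF assms] kp_F_poly[OF assms]
  by (simp add: kp_set_def Bhat_def)

end
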